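(* Let $(X,d)$ be a proper metric space, $x_0\in X$, and $f:X\to X$ continuous such that $f_*:(\mathcal P_1(X),w_1)\to(\mathcal P_1(X),w_1)$ is continuous. Suppose there are $R_0\ge0$, $0\le c<1$ and $m>0$ such that $f^m(B_R)\subset B_{cR}$ for all $R\ge R_0$, where $B_R$ is the closed ball of radius $R$ around $x_0$. Then every bounded closed set $B^w\subset\mathcal P_1(X)$ is $f_*$-admissible.
   Context: A metric space is proper if closed bounded sets are compact. $\mathcal P_1(X)$ is the set of Borel probability measures with finite first moment, metrized by $w_1(\mu,\nu)=\inf_{\pi\in\Pi(\mu,\nu)}\int d(x,y)\,d\pi$. $f_*\mu=\mu\circ f^{-1}$ is the push-forward. A closed bounded set $N$ is $F$-admissible if, whenever $F^k(\mu_n)\in N$ for $0\le k\le m_n$ with $m_n\to\infty$, the sequence $F^{m_n}(\mu_n)$ has a convergent subsequence. *)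

theory Defs
  imports "HOL-Probability.Probability"
begin

definition proper_space :: "'a::metric_space itself \<Rightarrow> bool" where
  "proper_space _ \<longleftrightarrow> (\<forall>S::'a set. closed S \<and> bounded S \<longrightarrow> compact S)"

definition P1 :: "'a::metric_space measure set" where
  "P1 = {M. prob_space M \<and> sets M = sets borel \<and>
            (\<exists>x0. (\<integral>\<^sup>+ x. ennreal (dist x0 x) \<partial>M) < \<infinity>)}"

definition couplings :: "'a::metric_space measure \<Rightarrow> 'a measure \<Rightarrow> ('a \<times> 'a) measure set" where
  "couplings \<mu> \<nu> = {\<pi>. sets \<pi> = sets (borel \<Otimes>\<^sub>M borel) \<and>
      distr \<pi> borel fst = \<mu> \<and> distr \<pi> borel snd = \<nu>}"

definition w1 :: "'a::metric_space measure \<Rightarrow> 'a measure \<Rightarrow> real" where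
  "w1 \<mu> \<nu> = enn2real (INF \<pi>\<in>couplings \<mu> \<nu>. \<integral>\<^sup>+ p. ennreal (dist (fst p) (snd p)) \<partial>\<pi>)"

definition pushfwd :: "('a::metric_space \<Rightarrow> 'a) \<Rightarrow> 'a measure \<Rightarrow> 'a measure" where
  "pushfwd f \<mu> = distr \<mu> borel f"

definition w1_continuous :: "('a::metric_space measure \<Rightarrow> 'a measure) \<Rightarrow> bool" where
  "w1_continuous F \<longleftrightarrow> (\<forall>\<mu>\<in>P1. \<forall>e>0. \<exists>d>0. \<forall>\<nu>\<in>P1. w1 \<mu> \<nu> < d \<longrightarrow> w1 (F \<mu>) (F \<nu>) < e)"

definition w1_bounded :: "'a::metric_space measure set \<Rightarrow> bool" where
  "w1_bounded N \<longleftrightarrow> (\<exists>\<nu>\<in>P1. \<exists>r. \<forall>\<mu>\<in>N. w1 \<nu> \<mu> \<le> r)"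

definition w1_closed :: "'a::metric_space measure set \<Rightarrow> bool" where
  "w1_closed N \<longleftrightarrow> (\<forall>s \<mu>. (\<forall>n. s n \<in> N) \<and> \<mu> \<in> P1 \<and> (\<lambda>n. w1 (s n) \<mu>) \<longlonglongrightarrow> 0 \<longrightarrow> \<mu> \<in> N)"

definition admissible :: "('a::metric_space measure \<Rightarrow> 'a measure) \<Rightarrow> 'a measure set \<Rightarrow> bool" where
  "admissible F N \<longleftrightarrow> (\<forall>(s::nat \<Rightarrow> 'a measure) (m::nat \<Rightarrow> nat).
     filterlim m at_top sequentially \<and> (\<forall>n. \<forall>k\<le>m n. (F ^^ k) (s n) \<in> N) \<longrightarrow>
     (\<exists>r \<mu>. strict_mono r \<and> \<mu> \<in> P1 \<and>
        (\<lambda>n. w1 ((F ^^ m (r n)) (s (r n))) \<mu>) \<longlonglongrightarrow> 0))"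

end

theory Submission
  imports Defs
begin

(*
  Let mu_n be such that f_*^k mu_n lies in Bw for k <= m_n, where m_n -> infinity, and put
  nu_n = f_*^(m_n) mu_n.  Writing nu_n = (f^(j m))_* rho with rho = f_*^(m_n - j m) mu_n in Bw,
  the contraction hypothesis f^m(B_R) <= B_(c R) for R >= R0 gives
  d(x0, f^(j m) x) <= c^j d(x0, x) + A with A = R0/(1-c); hence the part of the first moment of
  nu_n lying outside the ball B_K, K >= 2A, is at most 2 c^j times the first moment of rho, which
  is uniformly bounded on the W1-bounded set Bw.  So these tails tend to 0.

  The heart of the proof is a compactness theorem: in a proper space, a sequence in P_1 whose
  first-moment tails outside a fixed ball B_K vanish asymptotically has a W1-convergent
  subsequence.  It is proved by hand: nested finite partitions of B_K into cells of diameter at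
  most 2^-k, a diagonal subsequence along which all cell masses converge, a limit measure realised
  as the image of the uniform distribution on [0,1) under a quantile-type map, and explicit
  couplings obtained by gluing together the matched parts of two partitioned measures.
*)


(* 1. Proper spaces *)

lemma compact_cball_proper:
  fixes x0 :: "'a::metric_space"
  assumes "proper_space TYPE('a)"
  shows "compact (cball x0 R)"
  using assms unfolding proper_space_def by auto

(* A proper space is separable: finite nets of the balls cball x (real n) give a countable dense
   set.  The type class metric_space does not provide second countability, so this is needed to
   measure the distance function on the product sigma-algebra. *)
lemma proper_countable_dense:
  assumes "proper_space TYPE('a::metric_space)"
  shows "\<exists>D :: 'a set. countable D \<and> (\<forall>x e. e > 0 \<longrightarrow> (\<exists>z\<in>D. dist x z < e))"
proof -
  define x0 :: 'a where "x0 = undefined"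
  have "\<exists>F. finite F \<and> cball x0 (real n) \<subseteq> (\<Union>z\<in>F. ball z (1 / real (Suc k)))" for n k
  proof -
    have "compact (cball x0 (real n))" by (rule compact_cball_proper[OF assms])
    moreover have "cball x0 (real n) \<subseteq> (\<Union>z\<in>cball x0 (real n). ball z (1 / real (Suc k)))" by auto
    ultimately show ?thesis by (metis compactE_image open_ball)
  qed
  then obtain F where F: "\<And>n k. finite (F n k)"
    "\<And>n k. cball x0 (real n) \<subseteq> (\<Union>z\<in>F n k. ball z (1 / real (Suc k)))"
    by metis
  define D where "D = (\<Union>n k. F n k)"
  have "countable D" unfolding D_def using F(1) by (intro countable_UN) (auto intro: countable_finite)
  moreover have "\<exists>z\<in>D. dist x z < e" if "e > 0" for x e
  proof -
    obtain n :: nat where "dist x0 x \<le> real n" using real_arch_simple by blast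
    moreover obtain k :: nat where k: "1 / real (Suc k) < e" using \<open>e > 0\<close> by (metis nat_approx_posE)
    ultimately obtain z where "z \<in> F n k" "x \<in> ball z (1 / real (Suc k))" using F(2) by fastforce
    then have "z \<in> D" "dist x z < e" using k unfolding D_def by (auto simp: dist_commute)
    then show ?thesis by blast
  qed
  ultimately show ?thesis by blast
qed

(* The set {(x,y). dist x y < r} is a countable union of rectangles ball z a \<times> ball z b with
   z in a countable dense set and rational radii a + b < r. *)
lemma borel_measurable_dist_pair:
  assumes "proper_space TYPE('a::metric_space)"
  shows "(\<lambda>p. dist (fst p) (snd p)) \<in> borel_measurable (borel \<Otimes>\<^sub>M (borel :: 'a measure))"
proof (rule borel_measurableI_less)
  fix r :: real
  obtain D :: "'a set" where D: "countable D" "\<And>x e. e > 0 \<Longrightarrow> \<exists>z\<in>D. dist x z < e"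
    using proper_countable_dense[OF assms] by metis
  define I where "I = {(z,a,b). z \<in> D \<and> a \<in> \<rat> \<and> b \<in> \<rat> \<and> a + b < r}"
  have "I \<subseteq> D \<times> \<rat> \<times> \<rat>" unfolding I_def by auto
  moreover have "countable (D \<times> (\<rat>::real set) \<times> (\<rat>::real set))" using D(1) countable_rat by auto
  ultimately have cI: "countable I" by (rule countable_subset)
  have eq: "{p::'a\<times>'a. p \<in> space (borel \<Otimes>\<^sub>M borel) \<and> dist (fst p) (snd p) < r}
      = (\<Union>(z,a,b)\<in>I. ball z a \<times> ball z b)"
  proof (intro equalityI subsetI)
    fix p :: "'a \<times> 'a" assume "p \<in> {p \<in> space (borel \<Otimes>\<^sub>M borel). dist (fst p) (snd p) < r}"
    then obtain x y where p: "p = (x,y)" and lt: "dist x y < r" by (cases p) auto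
    define \<delta> where "\<delta> = (r - dist x y) / 3"
    have \<delta>: "\<delta> > 0" using lt unfolding \<delta>_def by simp
    obtain z where z: "z \<in> D" "dist x z < \<delta>" using D(2)[OF \<delta>] by blast
    obtain a where a: "a \<in> \<rat>" "dist x z < a" "a < \<delta>" using Rats_dense_in_real[OF z(2)] by blast
    have "dist z y \<le> dist x z + dist x y" using dist_triangle[of z y x] by (simp add: dist_commute)
    moreover have "r - 2 * \<delta> = dist x y + \<delta>" unfolding \<delta>_def by (simp add: field_simps)
    ultimately have "dist z y < r - 2 * \<delta>" using z(2) by linarith
    then obtain b where b: "b \<in> \<rat>" "dist z y < b" "b < r - 2 * \<delta>" using Rats_dense_in_real by blast
    have "(z,a,b) \<in> I" using z a b \<delta> unfolding I_def by auto
    moreover have "p \<in> ball z a \<times> ball z b" using a b p by (simp add: dist_commute)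
    ultimately show "p \<in> (\<Union>(z,a,b)\<in>I. ball z a \<times> ball z b)" by blast
  next
    fix p :: "'a \<times> 'a" assume "p \<in> (\<Union>(z,a,b)\<in>I. ball z a \<times> ball z b)"
    then obtain z a b where "(z,a,b) \<in> I" "p \<in> ball z a \<times> ball z b" by blast
    then have "a + b < r" "dist z (fst p) < a" "dist z (snd p) < b" unfolding I_def by auto
    moreover have "dist (fst p) (snd p) \<le> dist z (fst p) + dist z (snd p)"
      by (metis dist_commute dist_triangle)
    ultimately show "p \<in> {p \<in> space (borel \<Otimes>\<^sub>M borel). dist (fst p) (snd p) < r}"
      by (simp add: space_pair_measure)
  qed
  have "(\<Union>(z,a,b)\<in>I. ball z a \<times> ball z b) \<in> sets (borel \<Otimes>\<^sub>M borel)"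
    using cI by (intro sets.countable_UN'') (auto intro!: pair_measureI)
  then show "{p \<in> space (borel \<Otimes>\<^sub>M (borel::'a measure)). dist (fst p) (snd p) < r}
      \<in> sets (borel \<Otimes>\<^sub>M (borel::'a measure))"
    using eq by simp
qed

lemma borel_measurable_dist_const[measurable]:
  "(\<lambda>x. dist (a::'a::metric_space) x) \<in> borel_measurable borel"
  by (intro borel_measurable_continuous_onI continuous_intros)

lemma borel_measurable_sets_borel:
  assumes "sets M = sets borel" "f \<in> borel_measurable borel"
  shows "f \<in> borel_measurable M"
  using assms measurable_cong_sets by blast


(* 2. First moments, couplings and the Wasserstein distance *)

definition moment :: "'a::metric_space \<Rightarrow> 'a measure \<Rightarrow> ennreal" where
  "moment x0 \<mu> = (\<integral>\<^sup>+ x. ennreal (dist x0 x) \<partial>\<mu>)"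

definition cost :: "('a::metric_space \<times> 'a) measure \<Rightarrow> ennreal" where
  "cost \<pi> = (\<integral>\<^sup>+ p. ennreal (dist (fst p) (snd p)) \<partial>\<pi>)"

lemma w1_eq_INF_cost: "w1 \<mu> \<nu> = enn2real (INF \<pi>\<in>couplings \<mu> \<nu>. cost \<pi>)"
  unfolding w1_def cost_def by simp

lemma P1_D:
  assumes "\<mu> \<in> P1"
  shows "prob_space \<mu>" "sets \<mu> = sets borel"
  using assms unfolding P1_def by auto

(* The definition of P_1 asks for a finite moment about some point; by the triangle inequality
   the moment about every point is finite. *)
lemma moment_P1_finite:
  assumes "\<mu> \<in> P1"
  shows "moment x0 \<mu> < \<infinity>"
proof -
  from assms obtain x1 where s: "sets \<mu> = sets borel" and p: "prob_space \<mu>"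
    and f: "moment x1 \<mu> < \<infinity>" unfolding P1_def moment_def by auto
  interpret prob_space \<mu> by fact
  have m: "(\<lambda>x. ennreal (dist x1 x)) \<in> borel_measurable \<mu>"
    by (rule borel_measurable_sets_borel[OF s]) measurable
  have "moment x0 \<mu> \<le> (\<integral>\<^sup>+ x. ennreal (dist x0 x1) + ennreal (dist x1 x) \<partial>\<mu>)"
    unfolding moment_def
    by (intro nn_integral_mono) (simp add: dist_triangle ennreal_plus[symmetric] del: ennreal_plus)
  also have "\<dots> = ennreal (dist x0 x1) + moment x1 \<mu>"
    unfolding moment_def by (subst nn_integral_add) (auto simp: m emeasure_space_1)
  also have "\<dots> < \<infinity>" using f by (simp add: less_top[symmetric])
  finally show ?thesis .
qed

lemma coupling_sets: "\<pi> \<in> couplings \<mu> \<nu> \<Longrightarrow> sets \<pi> = sets (borel \<Otimes>\<^sub>M borel)"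
  unfolding couplings_def by auto

lemma coupling_nn_integral_fst:
  assumes "\<pi> \<in> couplings \<mu> \<nu>" "g \<in> borel_measurable borel"
  shows "(\<integral>\<^sup>+ p. g (fst p) \<partial>\<pi>) = (\<integral>\<^sup>+ x. g x \<partial>\<mu>)"
proof -
  have s: "sets \<pi> = sets (borel \<Otimes>\<^sub>M borel)" and d: "distr \<pi> borel fst = \<mu>"
    using assms(1) unfolding couplings_def by auto
  have m: "fst \<in> measurable \<pi> borel" unfolding measurable_cong_sets[OF s refl] by measurable
  have "(\<integral>\<^sup>+ x. g x \<partial>distr \<pi> borel fst) = (\<integral>\<^sup>+ p. g (fst p) \<partial>\<pi>)"
    by (rule nn_integral_distr[OF m]) (simp add: assms(2))
  then show ?thesis using d by simp
qed

lemma coupling_nn_integral_snd: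
  assumes "\<pi> \<in> couplings \<mu> \<nu>" "g \<in> borel_measurable borel"
  shows "(\<integral>\<^sup>+ p. g (snd p) \<partial>\<pi>) = (\<integral>\<^sup>+ x. g x \<partial>\<nu>)"
proof -
  have s: "sets \<pi> = sets (borel \<Otimes>\<^sub>M borel)" and d: "distr \<pi> borel snd = \<nu>"
    using assms(1) unfolding couplings_def by auto
  have m: "snd \<in> measurable \<pi> borel" unfolding measurable_cong_sets[OF s refl] by measurable
  have "(\<integral>\<^sup>+ x. g x \<partial>distr \<pi> borel snd) = (\<integral>\<^sup>+ p. g (snd p) \<partial>\<pi>)"
    by (rule nn_integral_distr[OF m]) (simp add: assms(2))
  then show ?thesis using d by simp
qed

(* The independent coupling shows that the set of couplings is never empty. *)
lemma product_coupling:
  assumes "\<mu> \<in> P1" "\<nu> \<in> P1"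
  shows "\<mu> \<Otimes>\<^sub>M \<nu> \<in> couplings \<mu> \<nu>"
proof -
  note pm = P1_D[OF assms(1)] P1_D[OF assms(2)]
  interpret pair_prob_space \<mu> \<nu>
    using pm by (simp add: pair_prob_space_def pair_sigma_finite_def prob_space_imp_sigma_finite)
  have "distr (\<mu> \<Otimes>\<^sub>M \<nu>) borel fst = distr (\<mu> \<Otimes>\<^sub>M \<nu>) \<mu> fst"
    by (rule distr_cong) (auto simp: pm)
  also have "\<dots> = \<mu>" using prob_space.distr_pair_fst[OF pm(3)] .
  finally have fst_marg: "distr (\<mu> \<Otimes>\<^sub>M \<nu>) borel fst = \<mu>" .
  have "distr (\<mu> \<Otimes>\<^sub>M \<nu>) borel snd = distr (\<mu> \<Otimes>\<^sub>M \<nu>) \<nu> snd"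
    by (rule distr_cong) (auto simp: pm)
  also have "\<dots> = \<nu>"
  proof (intro measure_eqI)
    fix A assume A: "A \<in> sets (distr (\<mu> \<Otimes>\<^sub>M \<nu>) \<nu> snd)"
    then have "emeasure (distr (\<mu> \<Otimes>\<^sub>M \<nu>) \<nu> snd) A = emeasure (\<mu> \<Otimes>\<^sub>M \<nu>) (space \<mu> \<times> A)"
      by (auto simp add: emeasure_distr space_pair_measure dest: sets.sets_into_space
          intro!: arg_cong2[where f=emeasure])
    with A show "emeasure (distr (\<mu> \<Otimes>\<^sub>M \<nu>) \<nu> snd) A = emeasure \<nu> A"
      using M2.emeasure_pair_measure_Times[OF sets.top[of \<mu>]] prob_space.emeasure_space_1[OF pm(1)]
      by simp
  qed simp
  finally have snd_marg: "distr (\<mu> \<Otimes>\<^sub>M \<nu>) borel snd = \<nu>" .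
  have "sets (\<mu> \<Otimes>\<^sub>M \<nu>) = sets (borel \<Otimes>\<^sub>M borel)"
    by (rule sets_pair_measure_cong) (auto simp: pm)
  with fst_marg snd_marg show ?thesis unfolding couplings_def by auto
qed

lemma cost_le_moments:
  assumes "\<pi> \<in> couplings \<mu> \<nu>"
  shows "cost \<pi> \<le> moment x0 \<mu> + moment x0 \<nu>"
proof -
  have s: "sets \<pi> = sets (borel \<Otimes>\<^sub>M borel)" using assms by (rule coupling_sets)
  have "cost \<pi> \<le> (\<integral>\<^sup>+ p. ennreal (dist x0 (fst p)) + ennreal (dist x0 (snd p)) \<partial>\<pi>)"
    unfolding cost_def
    by (intro nn_integral_mono) (metis dist_commute dist_triangle ennreal_leI ennreal_plus zero_le_dist)
  also have "\<dots> = (\<integral>\<^sup>+ p. ennreal (dist x0 (fst p)) \<partial>\<pi>) + (\<integral>\<^sup>+ p. ennreal (dist x0 (snd p)) \<partial>\<pi>)"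
    by (rule nn_integral_add) (auto simp: measurable_cong_sets[OF s refl])
  also have "\<dots> = moment x0 \<mu> + moment x0 \<nu>"
    unfolding moment_def using coupling_nn_integral_fst[OF assms, of "\<lambda>x. ennreal (dist x0 x)"]
      coupling_nn_integral_snd[OF assms, of "\<lambda>x. ennreal (dist x0 x)"] by simp
  finally show ?thesis .
qed

(* Between measures of P_1 the infimum defining w1 is a finite (so faithfully represented) real. *)
lemma INF_cost_finite:
  assumes "\<mu> \<in> P1" "\<nu> \<in> P1"
  shows "(INF \<pi>\<in>couplings \<mu> \<nu>. cost \<pi>) < \<infinity>"
proof -
  have "(INF \<pi>\<in>couplings \<mu> \<nu>. cost \<pi>) \<le> cost (\<mu> \<Otimes>\<^sub>M \<nu>)"
    by (rule INF_lower) (rule product_coupling[OF assms])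
  also have "\<dots> \<le> moment undefined \<mu> + moment undefined \<nu>"
    by (rule cost_le_moments[OF product_coupling[OF assms]])
  also have "\<dots> < \<infinity>"
    using moment_P1_finite[OF assms(1)] moment_P1_finite[OF assms(2)] by (simp add: less_top[symmetric])
  finally show ?thesis .
qed

lemma w1_le_cost:
  assumes "\<pi> \<in> couplings \<mu> \<nu>" "cost \<pi> \<le> ennreal e" "e \<ge> 0"
  shows "w1 \<mu> \<nu> \<le> e"
proof -
  have "(INF \<pi>\<in>couplings \<mu> \<nu>. cost \<pi>) \<le> ennreal e"
    using INF_lower[OF assms(1), of cost] assms(2) by order
  then have "enn2real (INF \<pi>\<in>couplings \<mu> \<nu>. cost \<pi>) \<le> enn2real (ennreal e)"
    by (intro enn2real_mono) auto
  then show ?thesis using assms(3) by (simp add: w1_eq_INF_cost)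
qed

lemma w1_le_cost_plus:
  assumes "\<pi> \<in> couplings \<mu> \<nu>" "cost \<pi> \<le> ennreal e + T" "T < \<infinity>" "e \<ge> 0"
  shows "w1 \<mu> \<nu> \<le> e + enn2real T"
proof -
  obtain t where t: "T = ennreal t" "0 \<le> t" using assms(3) by (cases T) auto
  then have "cost \<pi> \<le> ennreal (e + t)" using assms(2,4) by (simp add: ennreal_plus)
  then show ?thesis using t assms(4) by (intro w1_le_cost[OF assms(1)]) simp_all
qed

lemma moment_le_cost:
  assumes "\<pi> \<in> couplings \<nu> \<rho>" and "proper_space TYPE('a::metric_space)"
  shows "moment x0 (\<rho> :: 'a measure) \<le> moment x0 \<nu> + cost \<pi>"
proof -
  have s: "sets \<pi> = sets (borel \<Otimes>\<^sub>M borel)" using assms(1) by (rule coupling_sets)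
  have "moment x0 \<rho> = (\<integral>\<^sup>+ p. ennreal (dist x0 (snd p)) \<partial>\<pi>)"
    unfolding moment_def using coupling_nn_integral_snd[OF assms(1), of "\<lambda>x. ennreal (dist x0 x)"] by simp
  also have "\<dots> \<le> (\<integral>\<^sup>+ p. ennreal (dist x0 (fst p)) + ennreal (dist (fst p) (snd p)) \<partial>\<pi>)"
    by (intro nn_integral_mono) (metis dist_triangle ennreal_leI ennreal_plus zero_le_dist)
  also have "\<dots> = (\<integral>\<^sup>+ p. ennreal (dist x0 (fst p)) \<partial>\<pi>) + cost \<pi>"
    unfolding cost_def using borel_measurable_dist_pair[OF assms(2)]
    by (intro nn_integral_add) (auto simp: measurable_cong_sets[OF s refl])
  also have "(\<integral>\<^sup>+ p. ennreal (dist x0 (fst p)) \<partial>\<pi>) = moment x0 \<nu>"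
    unfolding moment_def using coupling_nn_integral_fst[OF assms(1), of "\<lambda>x. ennreal (dist x0 x)"] by simp
  finally show ?thesis .
qed

lemma ennreal_le_add_INF:
  fixes g :: "'b \<Rightarrow> ennreal"
  assumes bound: "\<And>i. i \<in> I \<Longrightarrow> x \<le> M + g i" and fin: "(INF i\<in>I. g i) < \<infinity>"
  shows "x \<le> M + (INF i\<in>I. g i)"
proof (rule ennreal_le_epsilon)
  fix e :: real assume e: "0 < e"
  let ?I = "INF i\<in>I. g i"
  have "?I = ennreal (enn2real ?I)" using fin by (simp add: less_top)
  moreover have "ennreal (enn2real ?I) < ennreal (enn2real ?I + e)"
    using e by (intro ennreal_lessI) (simp_all add: add_nonneg_pos)
  moreover have "ennreal (enn2real ?I + e) = ennreal (enn2real ?I) + ennreal e"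
    using e by (simp add: ennreal_plus)
  ultimately have "?I < ?I + ennreal e" by metis
  then obtain i where i: "i \<in> I" "g i < ?I + ennreal e" unfolding INF_less_iff by blast
  have "x \<le> M + g i" by (rule bound[OF i(1)])
  also have "\<dots> \<le> M + (?I + ennreal e)" using i(2) by (intro add_left_mono) simp
  finally show "x \<le> M + ?I + ennreal e" by (simp add: ac_simps)
qed

lemma moment_le_w1:
  assumes "\<nu> \<in> P1" "\<rho> \<in> P1" and pr: "proper_space TYPE('a::metric_space)"
  shows "moment x0 (\<rho> :: 'a measure) \<le> moment x0 \<nu> + ennreal (w1 \<nu> \<rho>)"
proof -
  have fin: "(INF \<pi>\<in>couplings \<nu> \<rho>. cost \<pi>) < \<infinity>" by (rule INF_cost_finite[OF assms(1,2)])
  have "moment x0 \<rho> \<le> moment x0 \<nu> + (INF \<pi>\<in>couplings \<nu> \<rho>. cost \<pi>)"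
    by (rule ennreal_le_add_INF[OF moment_le_cost[OF _ pr] fin])
  also have "(INF \<pi>\<in>couplings \<nu> \<rho>. cost \<pi>) = ennreal (w1 \<nu> \<rho>)"
    using fin by (simp add: w1_eq_INF_cost less_top)
  finally show ?thesis .
qed

lemma w1_bounded_moment_bound:
  assumes "w1_bounded N" "N \<subseteq> P1" and pr: "proper_space TYPE('a::metric_space)"
  obtains C where "C \<ge> 0" "\<And>\<rho>. \<rho> \<in> N \<Longrightarrow> moment x0 (\<rho> :: 'a measure) \<le> ennreal C"
proof -
  obtain \<nu> r where \<nu>: "\<nu> \<in> P1" "\<And>\<rho>. \<rho> \<in> N \<Longrightarrow> w1 \<nu> \<rho> \<le> r"
    using assms(1) unfolding w1_bounded_def by blast
  define C where "C = enn2real (moment x0 \<nu>) + max r 0"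
  have "moment x0 \<rho> \<le> ennreal C" if \<rho>: "\<rho> \<in> N" for \<rho>
  proof -
    have "moment x0 \<rho> \<le> moment x0 \<nu> + ennreal (w1 \<nu> \<rho>)"
      using moment_le_w1[OF \<nu>(1) _ pr] \<rho> assms(2) by auto
    also have "\<dots> \<le> ennreal (enn2real (moment x0 \<nu>)) + ennreal (max r 0)"
      using moment_P1_finite[OF \<nu>(1)] \<nu>(2)[OF \<rho>] by (intro add_mono ennreal_leI) (auto simp: less_top)
    also have "\<dots> = ennreal C" unfolding C_def by (simp add: ennreal_plus)
    finally show ?thesis .
  qed
  moreover have "C \<ge> 0" unfolding C_def by simp
  ultimately show ?thesis using that by blast
qed

(* 3. The dynamics of the push-forward *)

definition tail :: "'a::metric_space \<Rightarrow> real \<Rightarrow> 'a measure \<Rightarrow> ennreal" where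
  "tail x0 K \<nu> = (\<integral>\<^sup>+ y. ennreal (if K < dist x0 y then dist x0 y else 0) \<partial>\<nu>)"

lemma tail_le_moment: "tail x0 K \<nu> \<le> moment x0 \<nu>"
  unfolding tail_def moment_def by (intro nn_integral_mono) (simp add: ennreal_leI)

lemma borel_measurable_funpow:
  assumes "continuous_on UNIV (f::'a::metric_space \<Rightarrow> 'a)"
  shows "(f ^^ k) \<in> borel_measurable borel"
proof -
  have "continuous_on UNIV (f ^^ k)"
  proof (induction k)
    case (Suc k)
    then show ?case using assms by (simp add: continuous_on_compose2[of UNIV f UNIV "f ^^ k"])
  qed (simp add: continuous_on_id)
  then show ?thesis by (rule borel_measurable_continuous_onI)
qed

lemma pushfwd_funpow:
  assumes "continuous_on UNIV (f::'a::metric_space \<Rightarrow> 'a)" "sets \<rho> = sets borel"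
  shows "(pushfwd f ^^ k) \<rho> = distr \<rho> borel (f ^^ k)"
proof (induction k)
  case 0
  have "distr \<rho> borel (\<lambda>x. x) = distr \<rho> \<rho> (\<lambda>x. x)" by (rule distr_cong) (auto simp: assms)
  then show ?case by (simp add: distr_id)
next
  case (Suc k)
  have mk: "(f ^^ k) \<in> measurable \<rho> borel"
    using borel_measurable_funpow[OF assms(1)] measurable_cong_sets[OF assms(2) refl] by blast
  have mf: "f \<in> measurable borel borel" using borel_measurable_funpow[OF assms(1), of 1] by simp
  have "(pushfwd f ^^ Suc k) \<rho> = pushfwd f (distr \<rho> borel (f ^^ k))" using Suc by simp
  also have "\<dots> = distr (distr \<rho> borel (f ^^ k)) borel f" by (simp add: pushfwd_def)
  also have "\<dots> = distr \<rho> borel (f \<circ> (f ^^ k))" by (rule distr_distr[OF mf mk])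
  finally show ?case by (simp add: comp_def)
qed

lemma dist_funpow_contraction:
  fixes f :: "'a::metric_space \<Rightarrow> 'a"
  assumes "R0 \<ge> 0" "0 \<le> c" "c < 1"
    and contr: "\<forall>R\<ge>R0. (f ^^ m) ` cball x0 R \<subseteq> cball x0 (c * R)"
  shows "dist x0 ((f ^^ (j * m)) x) \<le> c ^ j * dist x0 x + R0 / (1 - c)"
proof (induction j)
  case 0 then show ?case using assms by simp
next
  case (Suc j)
  define A where "A = R0 / (1 - c)"
  have A: "c * A + R0 = A" using assms unfolding A_def by (auto simp: field_simps)
  define y where "y = (f ^^ (j * m)) x"
  define R where "R = max (dist x0 y) R0"
  have "y \<in> cball x0 R" "R \<ge> R0" unfolding R_def by simp_all
  then have "(f ^^ m) y \<in> cball x0 (c * R)" using contr by blast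
  then have "dist x0 ((f ^^ m) y) \<le> c * R" by simp
  also have "\<dots> \<le> c * dist x0 y + c * R0"
    unfolding R_def using assms by (simp add: max_def mult_left_mono)
  also have "\<dots> \<le> c * (c ^ j * dist x0 x + A) + R0"
    using Suc.IH assms unfolding y_def A_def by (intro add_mono mult_left_mono) (auto intro: mult_left_le_one_le)
  also have "\<dots> = c ^ Suc j * dist x0 x + (c * A + R0)" by (simp add: algebra_simps)
  finally show ?case using A unfolding y_def A_def by (simp add: funpow_add)
qed

lemma tail_distr_le:
  assumes s: "sets \<rho> = sets borel" and c: "0 \<le> c"
    and bnd: "\<And>x. dist x0 (G x) \<le> c * dist x0 x + A" and A: "A \<ge> 0" and K: "K \<ge> 2 * A"
    and G: "G \<in> borel_measurable borel"
  shows "tail x0 K (distr \<rho> borel G) \<le> ennreal (2 * c) * moment x0 \<rho>"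
proof -
  have mG: "G \<in> measurable \<rho> borel" using G measurable_cong_sets[OF s refl] by blast
  have "tail x0 K (distr \<rho> borel G) = (\<integral>\<^sup>+ x. ennreal (if K < dist x0 (G x) then dist x0 (G x) else 0) \<partial>\<rho>)"
    unfolding tail_def by (rule nn_integral_distr[OF mG]) measurable
  also have "\<dots> \<le> (\<integral>\<^sup>+ x. ennreal (2 * c) * ennreal (dist x0 x) \<partial>\<rho>)"
  proof (intro nn_integral_mono)
    fix x
    have "(if K < dist x0 (G x) then dist x0 (G x) else 0) \<le> 2 * c * dist x0 x"
    proof (cases "K < dist x0 (G x)")
      case True
      then have "A < c * dist x0 x" using bnd[of x] K A by linarith
      then show ?thesis using True bnd[of x] by simp
    qed (use c in simp)
    then show "ennreal (if K < dist x0 (G x) then dist x0 (G x) else 0) \<le> ennreal (2 * c) * ennreal (dist x0 x)"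
      by (simp add: ennreal_mult[symmetric] c ennreal_leI del: ennreal_mult)
  qed
  also have "\<dots> = ennreal (2 * c) * moment x0 \<rho>"
    unfolding moment_def by (rule nn_integral_cmult) (rule borel_measurable_sets_borel[OF s], measurable)
  finally show ?thesis .
qed

lemma orbit_tails_vanish:
  fixes f :: "'a::metric_space \<Rightarrow> 'a"
  assumes cf: "continuous_on UNIV f"
    and R0: "R0 \<ge> 0" and c: "0 \<le> c" "c < 1"
    and contr: "\<forall>R\<ge>R0. (f ^^ m) ` cball x0 R \<subseteq> cball x0 (c * R)"
    and N: "N \<subseteq> P1" and C: "C \<ge> 0" "\<And>\<rho>. \<rho> \<in> N \<Longrightarrow> moment x0 \<rho> \<le> ennreal C"
    and K: "K \<ge> 2 * (R0 / (1 - c))"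
    and lengths: "filterlim ms at_top sequentially"
    and orbit: "\<And>n k. k \<le> ms n \<Longrightarrow> (pushfwd f ^^ k) (s n) \<in> N"
    and e: "e > 0"
  shows "\<exists>n0. \<forall>n\<ge>n0. tail x0 K ((pushfwd f ^^ ms n) (s n)) \<le> ennreal e"
proof -
  have "(\<lambda>j. 2 * c ^ j * C) \<longlonglongrightarrow> 2 * 0 * C"
    using c by (intro tendsto_intros LIMSEQ_power_zero) auto
  then have "eventually (\<lambda>j. 2 * c ^ j * C < e) sequentially"
    using e by (intro order_tendstoD(2)) auto
  then obtain j where j: "2 * c ^ j * C < e" by (auto simp: eventually_sequentially)
  have "eventually (\<lambda>n. j * m \<le> ms n) sequentially"
    using lengths by (simp add: filterlim_at_top)
  then obtain n0 where n0: "\<And>n. n \<ge> n0 \<Longrightarrow> j * m \<le> ms n" by (auto simp: eventually_sequentially)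
  have "tail x0 K ((pushfwd f ^^ ms n) (s n)) \<le> ennreal e" if n: "n \<ge> n0" for n
  proof -
    define \<rho> where "\<rho> = (pushfwd f ^^ (ms n - j * m)) (s n)"
    have \<rho>: "\<rho> \<in> N" unfolding \<rho>_def using orbit by simp
    then have s\<rho>: "sets \<rho> = sets borel" using N P1_D by blast
    have "(pushfwd f ^^ (j * m + (ms n - j * m))) (s n) = (pushfwd f ^^ (j * m)) \<rho>"
      unfolding \<rho>_def by (simp add: funpow_add)
    then have "(pushfwd f ^^ ms n) (s n) = (pushfwd f ^^ (j * m)) \<rho>" using n0[OF n] by simp
    also have "\<dots> = distr \<rho> borel (f ^^ (j * m))" by (rule pushfwd_funpow[OF cf s\<rho>])
    finally have "tail x0 K ((pushfwd f ^^ ms n) (s n)) = tail x0 K (distr \<rho> borel (f ^^ (j * m)))"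
      by simp
    also have "\<dots> \<le> ennreal (2 * c ^ j) * moment x0 \<rho>"
      using tail_distr_le[OF s\<rho> _ dist_funpow_contraction[OF R0 c contr] _ K borel_measurable_funpow[OF cf]]
        R0 c by simp
    also have "\<dots> \<le> ennreal (2 * c ^ j) * ennreal C" by (intro mult_left_mono C \<rho>) simp
    also have "\<dots> \<le> ennreal e" using j c C by (simp add: ennreal_mult[symmetric] ennreal_leI del: ennreal_mult)
    finally show ?thesis .
  qed
  then show ?thesis by blast
qed

(* 4. Gluing couplings along matched partitions *)

lemma disjoint_indicator_sum_bounds:
  fixes b :: "'w \<Rightarrow> real"
  assumes fin: "finite W" and disj: "disjoint_family_on S W"
    and b: "\<And>w. w \<in> W \<Longrightarrow> 0 \<le> b w" "\<And>w. w \<in> W \<Longrightarrow> b w \<le> 1"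
  shows "0 \<le> (\<Sum>w\<in>W. b w * indicator (S w) x)" "(\<Sum>w\<in>W. b w * indicator (S w) x) \<le> 1"
proof -
  show "0 \<le> (\<Sum>w\<in>W. b w * indicator (S w) x)" by (rule sum_nonneg) (simp add: b(1))
  show "(\<Sum>w\<in>W. b w * indicator (S w) x) \<le> 1"
  proof (cases "\<exists>w0\<in>W. x \<in> S w0")
    case True
    then obtain w0 where w0: "w0 \<in> W" "x \<in> S w0" by blast
    have "(\<Sum>w\<in>W-{w0}. b w * indicator (S w) x) = 0"
    proof (intro sum.neutral ballI)
      fix w assume "w \<in> W - {w0}"
      then have "x \<notin> S w" using disj w0 unfolding disjoint_family_on_def by blast
      then show "b w * indicator (S w) x = 0" by simp
    qed
    then have "(\<Sum>w\<in>W. b w * indicator (S w) x) = b w0"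
      using sum.remove[OF fin w0(1), of "\<lambda>w. b w * indicator (S w) x"] w0(2) by simp
    then show ?thesis using w0 b by simp
  next
    case False
    then have "(\<Sum>w\<in>W. b w * indicator (S w) x) = 0" by (intro sum.neutral) auto
    then show ?thesis by simp
  qed
qed

lemma sum_ennreal_indicator:
  assumes "\<And>w. w \<in> W \<Longrightarrow> 0 \<le> b w"
  shows "(\<Sum>w\<in>W. ennreal (b w) * indicator (S w) x) = ennreal (\<Sum>w\<in>W. b w * indicator (S w) x)"
proof -
  have "(\<Sum>w\<in>W. ennreal (b w) * indicator (S w) x) = (\<Sum>w\<in>W. ennreal (b w * indicator (S w) x))"
    by (intro sum.cong refl) (simp add: ennreal_mult'' ennreal_indicator)
  also have "\<dots> = ennreal (\<Sum>w\<in>W. b w * indicator (S w) x)"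
    using assms by (intro sum_ennreal) auto
  finally show ?thesis .
qed

(* The weight a w is the part of the mass of S w that is matched
   with mass of another measure; matched x is the matched fraction of the mass near x. *)
locale matched_part = prob_space M for M :: "'a measure" +
  fixes W :: "'w set" and S :: "'w \<Rightarrow> 'a set" and a :: "'w \<Rightarrow> real"
  assumes finite_index: "finite W" and sets_part: "\<And>w. w \<in> W \<Longrightarrow> S w \<in> sets M"
    and disjoint_part: "disjoint_family_on S W"
    and weight_nonneg: "\<And>w. w \<in> W \<Longrightarrow> 0 \<le> a w"
    and weight_le: "\<And>w. w \<in> W \<Longrightarrow> a w \<le> measure M (S w)"
begin

definition matched :: "'a \<Rightarrow> real" where
  "matched x = (\<Sum>w\<in>W. (a w / measure M (S w)) * indicator (S w) x)"

lemma matched_fraction_bounds: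
  "w \<in> W \<Longrightarrow> 0 \<le> a w / measure M (S w)" "w \<in> W \<Longrightarrow> a w / measure M (S w) \<le> 1"
  using weight_nonneg weight_le measure_nonneg[of M "S w"] by (auto simp: divide_le_eq_1 less_le)

lemma matched_bounds: "0 \<le> matched x" "matched x \<le> 1"
  unfolding matched_def
  using disjoint_indicator_sum_bounds[OF finite_index disjoint_part, of "\<lambda>w. a w / measure M (S w)"]
    matched_fraction_bounds by auto

lemma matched_measurable[measurable]: "matched \<in> borel_measurable M"
  unfolding matched_def
  by (intro borel_measurable_sum borel_measurable_times borel_measurable_const borel_measurable_indicator)
     (auto simp: sets_part)

lemma weight_sum_le_1: "(\<Sum>w\<in>W. a w) \<le> 1"
proof -
  have "(\<Sum>w\<in>W. a w) \<le> (\<Sum>w\<in>W. measure M (S w))" using weight_le by (intro sum_mono) auto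
  also have "\<dots> = measure M (\<Union>w\<in>W. S w)"
    using finite_index sets_part disjoint_part by (intro measure_finite_Union[symmetric]) auto
  also have "\<dots> \<le> 1" by (rule prob_le_1)
  finally show ?thesis .
qed

lemma ennreal_matched:
  "(\<Sum>w\<in>W. ennreal (a w / measure M (S w)) * indicator (S w) x) = ennreal (matched x)"
  unfolding matched_def by (rule sum_ennreal_indicator) (use matched_fraction_bounds in auto)

lemma nn_integral_matched: "(\<integral>\<^sup>+ x. ennreal (matched x) \<partial>M) = ennreal (\<Sum>w\<in>W. a w)"
proof -
  have "(\<integral>\<^sup>+ x. ennreal (matched x) \<partial>M)
      = (\<Sum>w\<in>W. (\<integral>\<^sup>+ x. ennreal (a w / measure M (S w)) * indicator (S w) x \<partial>M))"
    unfolding ennreal_matched[symmetric] using sets_part by (intro nn_integral_sum) auto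
  also have "\<dots> = (\<Sum>w\<in>W. ennreal (a w))"
  proof (intro sum.cong refl)
    fix w assume w: "w \<in> W"
    have "(\<integral>\<^sup>+ x. ennreal (a w / measure M (S w)) * indicator (S w) x \<partial>M)
        = ennreal (a w / measure M (S w)) * ennreal (measure M (S w))"
      using sets_part[OF w] by (simp add: nn_integral_cmult_indicator emeasure_eq_measure)
    also have "\<dots> = ennreal (a w)"
    proof (cases "measure M (S w) = 0")
      case True
      then show ?thesis using weight_nonneg[OF w] weight_le[OF w] by simp
    next
      case False
      then show ?thesis using matched_fraction_bounds[OF w] by (simp add: ennreal_mult[symmetric])
    qed
    finally show "(\<integral>\<^sup>+ x. ennreal (a w / measure M (S w)) * indicator (S w) x \<partial>M) = ennreal (a w)" .
  qed
  also have "\<dots> = ennreal (\<Sum>w\<in>W. a w)" using weight_nonneg by (intro sum_ennreal) auto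
  finally show ?thesis .
qed

lemma nn_integral_unmatched:
  "(\<integral>\<^sup>+ x. ennreal (1 - matched x) \<partial>M) = ennreal (1 - (\<Sum>w\<in>W. a w))"
proof -
  have "(\<integral>\<^sup>+ x. ennreal (1 - matched x) \<partial>M) + ennreal (\<Sum>w\<in>W. a w)
      = (\<integral>\<^sup>+ x. ennreal (1 - matched x) + ennreal (matched x) \<partial>M)"
    by (subst nn_integral_add) (auto simp: nn_integral_matched)
  also have "\<dots> = (\<integral>\<^sup>+ x. 1 \<partial>M)"
    using matched_bounds by (intro nn_integral_cong) (simp add: ennreal_plus[symmetric] del: ennreal_plus)
  also have "\<dots> = ennreal (1 - (\<Sum>w\<in>W. a w)) + ennreal (\<Sum>w\<in>W. a w)"
    using weight_sum_le_1 weight_nonneg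
    by (simp add: emeasure_space_1 ennreal_plus[symmetric] sum_nonneg del: ennreal_plus)
  finally show ?thesis by (simp only: ennreal_add_left_cancel add.commute) simp
qed

lemma AE_fully_matched:
  assumes "(\<Sum>w\<in>W. a w) = 1"
  shows "AE x in M. matched x = 1"
proof -
  have "(\<integral>\<^sup>+ x. ennreal (1 - matched x) \<partial>M) = 0" using assms by (simp add: nn_integral_unmatched)
  then have "AE x in M. ennreal (1 - matched x) = 0" by (subst nn_integral_0_iff_AE[symmetric]) auto
  then show ?thesis
  proof (rule AE_mp, intro AE_I2 impI)
    fix x assume "ennreal (1 - matched x) = 0"
    then show "matched x = 1" using matched_bounds[of x] by (simp add: ennreal_eq_0_iff)
  qed
qed

end

lemma unmatched_moment_le:
  fixes x0 :: "'a::metric_space"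
  assumes "matched_part M W S a" and s: "sets M = sets borel" and K: "K \<ge> 0"
  shows "(\<integral>\<^sup>+ x. ennreal (1 - matched_part.matched M W S a x) * ennreal (dist x0 x) \<partial>M)
    \<le> ennreal (K * (1 - (\<Sum>w\<in>W. a w))) + tail x0 K M"
proof -
  interpret matched_part M W S a by fact
  have mF: "(\<lambda>x. ennreal (K * (1 - matched x))) \<in> borel_measurable M" by measurable
  have mT: "(\<lambda>y. ennreal (if K < dist x0 y then dist x0 y else 0)) \<in> borel_measurable M"
    by (rule borel_measurable_sets_borel[OF s]) measurable
  have "(\<integral>\<^sup>+ x. ennreal (1 - matched x) * ennreal (dist x0 x) \<partial>M)
      \<le> (\<integral>\<^sup>+ x. ennreal (K * (1 - matched x)) + ennreal (if K < dist x0 x then dist x0 x else 0) \<partial>M)"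
  proof (intro nn_integral_mono)
    fix x
    have F: "0 \<le> 1 - matched x" "1 - matched x \<le> 1" using matched_bounds[of x] by auto
    have "(1 - matched x) * dist x0 x \<le> K * (1 - matched x) + (if K < dist x0 x then dist x0 x else 0)"
    proof (cases "K < dist x0 x")
      case True
      have "(1 - matched x) * dist x0 x \<le> 1 * dist x0 x" using F by (intro mult_right_mono) auto
      moreover have "0 \<le> K * (1 - matched x)" using F K by simp
      ultimately show ?thesis using True by simp
    next
      case False
      then have "(1 - matched x) * dist x0 x \<le> (1 - matched x) * K" using F by (intro mult_left_mono) auto
      then show ?thesis using False by (simp add: mult.commute)
    qed
    then show "ennreal (1 - matched x) * ennreal (dist x0 x)
        \<le> ennreal (K * (1 - matched x)) + ennreal (if K < dist x0 x then dist x0 x else 0)"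
      using F K by (simp add: ennreal_mult[symmetric] ennreal_plus[symmetric] ennreal_leI del: ennreal_plus)
  qed
  also have "\<dots> = ennreal K * (\<integral>\<^sup>+ x. ennreal (1 - matched x) \<partial>M) + tail x0 K M"
    unfolding tail_def using K matched_bounds
    by (subst nn_integral_add[OF mF mT]) (simp add: ennreal_mult nn_integral_cmult)
  also have "\<dots> = ennreal (K * (1 - (\<Sum>w\<in>W. a w))) + tail x0 K M"
    using K weight_sum_le_1 by (simp add: nn_integral_unmatched ennreal_mult)
  finally show ?thesis .
qed

lemma (in pair_sigma_finite) nn_integral_product_fun:
  assumes f[measurable]: "f \<in> borel_measurable M1" and g[measurable]: "g \<in> borel_measurable M2"
  shows "(\<integral>\<^sup>+ p. f (fst p) * g (snd p) \<partial>(M1 \<Otimes>\<^sub>M M2)) = (\<integral>\<^sup>+ x. f x \<partial>M1) * (\<integral>\<^sup>+ y. g y \<partial>M2)"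
proof -
  have "(\<integral>\<^sup>+ p. f (fst p) * g (snd p) \<partial>(M1 \<Otimes>\<^sub>M M2)) = (\<integral>\<^sup>+ x. \<integral>\<^sup>+ y. f x * g y \<partial>M2 \<partial>M1)"
    by (rule M2.nn_integral_fst[symmetric, where f="\<lambda>p. f (fst p) * g (snd p)", simplified]) measurable
  also have "\<dots> = (\<integral>\<^sup>+ x. f x * (\<integral>\<^sup>+ y. g y \<partial>M2) \<partial>M1)"
    by (intro nn_integral_cong nn_integral_cmult) simp
  also have "\<dots> = (\<integral>\<^sup>+ x. f x \<partial>M1) * (\<integral>\<^sup>+ y. g y \<partial>M2)"
    by (rule nn_integral_multc) simp
  finally show ?thesis .
qed

lemma (in pair_sigma_finite) distr_density_fst:
  assumes \<phi>[measurable]: "\<phi> \<in> borel_measurable (M1 \<Otimes>\<^sub>M M2)"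
    and rows: "AE x in M1. (\<integral>\<^sup>+ t. \<phi> (x, t) \<partial>M2) = 1"
  shows "distr (density (M1 \<Otimes>\<^sub>M M2) \<phi>) M1 fst = M1"
proof (rule measure_eqI)
  fix A assume "A \<in> sets (distr (density (M1 \<Otimes>\<^sub>M M2) \<phi>) M1 fst)"
  then have A[measurable]: "A \<in> sets M1" by simp
  have "emeasure (distr (density (M1 \<Otimes>\<^sub>M M2) \<phi>) M1 fst) A
      = emeasure (density (M1 \<Otimes>\<^sub>M M2) \<phi>) (A \<times> space M2)"
    using sets.sets_into_space[OF A]
    by (subst emeasure_distr) (auto simp: space_pair_measure intro!: arg_cong2[where f=emeasure])
  also have "\<dots> = (\<integral>\<^sup>+ x. \<integral>\<^sup>+ t. \<phi> (x, t) * indicator (A \<times> space M2) (x, t) \<partial>M2 \<partial>M1)"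
    by (subst emeasure_density) (auto intro!: M2.nn_integral_fst[symmetric])
  also have "\<dots> = (\<integral>\<^sup>+ x. (\<integral>\<^sup>+ t. \<phi> (x, t) \<partial>M2) * indicator A x \<partial>M1)"
  proof (intro nn_integral_cong)
    fix x assume x: "x \<in> space M1"
    have "(\<integral>\<^sup>+ t. \<phi> (x, t) * indicator (A \<times> space M2) (x, t) \<partial>M2) = (\<integral>\<^sup>+ t. \<phi> (x, t) * indicator A x \<partial>M2)"
      by (intro nn_integral_cong) (auto simp: indicator_def)
    also have "\<dots> = (\<integral>\<^sup>+ t. \<phi> (x, t) \<partial>M2) * indicator A x"
      using measurable_compose[OF measurable_Pair1'[OF x] \<phi>] by (rule nn_integral_multc)
    finally show "(\<integral>\<^sup>+ t. \<phi> (x, t) * indicator (A \<times> space M2) (x, t) \<partial>M2)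
        = (\<integral>\<^sup>+ t. \<phi> (x, t) \<partial>M2) * indicator A x" .
  qed
  also have "\<dots> = (\<integral>\<^sup>+ x. indicator A x \<partial>M1)"
    by (intro nn_integral_cong_AE) (use rows in auto)
  also have "\<dots> = emeasure M1 A" by simp
  finally show "emeasure (distr (density (M1 \<Otimes>\<^sub>M M2) \<phi>) M1 fst) A = emeasure M1 A" .
qed simp

lemma (in pair_sigma_finite) distr_density_snd:
  assumes \<phi>[measurable]: "\<phi> \<in> borel_measurable (M1 \<Otimes>\<^sub>M M2)"
    and columns: "AE t in M2. (\<integral>\<^sup>+ x. \<phi> (x, t) \<partial>M1) = 1"
  shows "distr (density (M1 \<Otimes>\<^sub>M M2) \<phi>) M2 snd = M2"
proof (rule measure_eqI)
  fix A assume "A \<in> sets (distr (density (M1 \<Otimes>\<^sub>M M2) \<phi>) M2 snd)"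
  then have A[measurable]: "A \<in> sets M2" by simp
  have "emeasure (distr (density (M1 \<Otimes>\<^sub>M M2) \<phi>) M2 snd) A
      = emeasure (density (M1 \<Otimes>\<^sub>M M2) \<phi>) (space M1 \<times> A)"
    using sets.sets_into_space[OF A]
    by (subst emeasure_distr) (auto simp: space_pair_measure intro!: arg_cong2[where f=emeasure])
  also have "\<dots> = (\<integral>\<^sup>+ t. \<integral>\<^sup>+ x. \<phi> (x, t) * indicator (space M1 \<times> A) (x, t) \<partial>M1 \<partial>M2)"
    by (subst emeasure_density) (auto intro!: nn_integral_snd[symmetric])
  also have "\<dots> = (\<integral>\<^sup>+ t. (\<integral>\<^sup>+ x. \<phi> (x, t) \<partial>M1) * indicator A t \<partial>M2)"
  proof (intro nn_integral_cong)
    fix t assume t: "t \<in> space M2"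
    have "(\<integral>\<^sup>+ x. \<phi> (x, t) * indicator (space M1 \<times> A) (x, t) \<partial>M1) = (\<integral>\<^sup>+ x. \<phi> (x, t) * indicator A t \<partial>M1)"
      by (intro nn_integral_cong) (auto simp: indicator_def)
    also have "\<dots> = (\<integral>\<^sup>+ x. \<phi> (x, t) \<partial>M1) * indicator A t"
      using measurable_compose[OF measurable_Pair2'[OF t] \<phi>] by (rule nn_integral_multc)
    finally show "(\<integral>\<^sup>+ x. \<phi> (x, t) * indicator (space M1 \<times> A) (x, t) \<partial>M1)
        = (\<integral>\<^sup>+ x. \<phi> (x, t) \<partial>M1) * indicator A t" .
  qed
  also have "\<dots> = (\<integral>\<^sup>+ t. indicator A t \<partial>M2)"
    by (intro nn_integral_cong_AE) (use columns in auto)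
  also have "\<dots> = emeasure M2 A" by simp
  finally show "emeasure (distr (density (M1 \<Otimes>\<^sub>M M2) \<phi>) M2 snd) A = emeasure M2 A" .
qed simp

lemma fill_to_one:
  fixes F r :: real
  assumes "0 \<le> F" "F \<le> 1" "0 < r \<or> F = 1"
  shows "ennreal F + ennreal (1 - F) * ennreal (1 / r) * ennreal r = 1"
proof (cases "F = 1")
  case False
  then have "r > 0" using assms by auto
  then have "ennreal (1 / r) * ennreal r = 1" by (simp add: ennreal_mult[symmetric])
  then show ?thesis using assms by (simp add: mult.assoc ennreal_plus[symmetric] del: ennreal_plus)
qed simp

(* The glued coupling puts the product of the normalised restrictions with mass a w on each
   rectangle S w \<times> T w, and couples the remaining (unmatched) mass rest = 1 - sum a
   independently. *)
locale glued_coupling = S1: matched_part M1 W S a + S2: matched_part M2 W T a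
  for M1 :: "'a measure" and M2 :: "'b measure" and W :: "'w set" and S T a
begin

sublocale P: pair_prob_space M1 M2 by unfold_locales

definition rest :: real where "rest = 1 - (\<Sum>w\<in>W. a w)"

definition cell_density :: "'w \<Rightarrow> ennreal" where
  "cell_density w = ennreal (a w / (measure M1 (S w) * measure M2 (T w)))"

definition glue :: "'a \<times> 'b \<Rightarrow> ennreal" where
  "glue p = (\<Sum>w\<in>W. cell_density w * indicator (S w) (fst p) * indicator (T w) (snd p))
     + ennreal (1 - S1.matched (fst p)) * ennreal (1 - S2.matched (snd p)) * ennreal (1 / rest)"

lemma rest_nonneg: "0 \<le> rest" unfolding rest_def using S1.weight_sum_le_1 by simp

lemma glue_measurable[measurable]: "glue \<in> borel_measurable (M1 \<Otimes>\<^sub>M M2)"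
proof -
  have [measurable]: "w \<in> W \<Longrightarrow> S w \<in> sets M1" "w \<in> W \<Longrightarrow> T w \<in> sets M2" for w
    using S1.sets_part S2.sets_part by auto
  show ?thesis unfolding glue_def
    by (intro borel_measurable_add borel_measurable_sum borel_measurable_times borel_measurable_const
        measurable_compose[OF measurable_fst borel_measurable_indicator]
        measurable_compose[OF measurable_snd borel_measurable_indicator]
        measurable_compose[OF measurable_fst measurable_compose[OF S1.matched_measurable measurable_ennreal]]
        measurable_compose[OF measurable_snd measurable_compose[OF S2.matched_measurable measurable_ennreal]]
        borel_measurable_diff) (auto intro: S1.sets_part S2.sets_part)
qed

lemma cell_density_emeasure2:
  assumes w: "w \<in> W"
  shows "cell_density w * emeasure M2 (T w) = ennreal (a w / measure M1 (S w))"
proof (cases "measure M2 (T w) = 0")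
  case True
  then show ?thesis using S2.weight_nonneg[OF w] S2.weight_le[OF w] unfolding cell_density_def by simp
next
  case False
  then show ?thesis using S1.weight_nonneg[OF w] unfolding cell_density_def
    by (simp add: S2.emeasure_eq_measure ennreal_mult[symmetric] field_simps)
qed

lemma cell_density_emeasure1:
  assumes w: "w \<in> W"
  shows "cell_density w * emeasure M1 (S w) = ennreal (a w / measure M2 (T w))"
proof (cases "measure M1 (S w) = 0")
  case True
  then show ?thesis using S1.weight_nonneg[OF w] S1.weight_le[OF w] unfolding cell_density_def by simp
next
  case False
  then show ?thesis using S1.weight_nonneg[OF w] unfolding cell_density_def
    by (simp add: S1.emeasure_eq_measure ennreal_mult[symmetric] field_simps)
qed

lemma cell_density_emeasure12:
  assumes w: "w \<in> W"
  shows "cell_density w * (emeasure M1 (S w) * emeasure M2 (T w)) = ennreal (a w)"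
proof (cases "measure M2 (T w) = 0")
  case True
  then show ?thesis using S2.weight_nonneg[OF w] S2.weight_le[OF w] unfolding cell_density_def by simp
next
  case False
  then show ?thesis using cell_density_emeasure1[OF w] S2.weight_nonneg[OF w]
    by (simp add: mult.assoc[symmetric] S2.emeasure_eq_measure ennreal_mult[symmetric])
qed

lemma row_integral:
  "(\<integral>\<^sup>+ t. glue (x, t) \<partial>M2) = (\<Sum>w\<in>W. ennreal (a w / measure M1 (S w)) * indicator (S w) x)
     + ennreal (1 - S1.matched x) * ennreal (1 / rest) * ennreal rest"
proof -
  have [measurable]: "w \<in> W \<Longrightarrow> T w \<in> sets M2" for w using S2.sets_part by auto
  have "(\<integral>\<^sup>+ t. glue (x, t) \<partial>M2) = (\<integral>\<^sup>+ t. (\<Sum>w\<in>W. (cell_density w * indicator (S w) x) * indicator (T w) t)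
      + (ennreal (1 - S1.matched x) * ennreal (1 / rest)) * ennreal (1 - S2.matched t) \<partial>M2)"
    unfolding glue_def by (intro nn_integral_cong) (simp add: ac_simps)
  also have "\<dots> = (\<Sum>w\<in>W. (cell_density w * indicator (S w) x) * emeasure M2 (T w))
      + (ennreal (1 - S1.matched x) * ennreal (1 / rest)) * ennreal rest"
    by (subst nn_integral_add, measurable)
       (auto simp: nn_integral_sum nn_integral_cmult S2.nn_integral_unmatched rest_def
         intro!: sum.cong nn_integral_cmult_indicator S2.sets_part)
  also have "\<dots> = (\<Sum>w\<in>W. ennreal (a w / measure M1 (S w)) * indicator (S w) x)
      + ennreal (1 - S1.matched x) * ennreal (1 / rest) * ennreal rest"
    by (intro arg_cong2[where f="(+)"] sum.cong refl) (auto simp: cell_density_emeasure2[symmetric] ac_simps)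
  finally show ?thesis .
qed

lemma column_integral:
  "(\<integral>\<^sup>+ x. glue (x, t) \<partial>M1) = (\<Sum>w\<in>W. ennreal (a w / measure M2 (T w)) * indicator (T w) t)
     + ennreal (1 - S2.matched t) * ennreal (1 / rest) * ennreal rest"
proof -
  have [measurable]: "w \<in> W \<Longrightarrow> S w \<in> sets M1" for w using S1.sets_part by auto
  have "(\<integral>\<^sup>+ x. glue (x, t) \<partial>M1) = (\<integral>\<^sup>+ x. (\<Sum>w\<in>W. (cell_density w * indicator (T w) t) * indicator (S w) x)
      + (ennreal (1 - S2.matched t) * ennreal (1 / rest)) * ennreal (1 - S1.matched x) \<partial>M1)"
    unfolding glue_def by (intro nn_integral_cong) (simp add: ac_simps)
  also have "\<dots> = (\<Sum>w\<in>W. (cell_density w * indicator (T w) t) * emeasure M1 (S w))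
      + (ennreal (1 - S2.matched t) * ennreal (1 / rest)) * ennreal rest"
    by (subst nn_integral_add, measurable)
       (auto simp: nn_integral_sum nn_integral_cmult S1.nn_integral_unmatched rest_def
         intro!: sum.cong nn_integral_cmult_indicator S1.sets_part)
  also have "\<dots> = (\<Sum>w\<in>W. ennreal (a w / measure M2 (T w)) * indicator (T w) t)
      + ennreal (1 - S2.matched t) * ennreal (1 / rest) * ennreal rest"
    by (intro arg_cong2[where f="(+)"] sum.cong refl) (auto simp: cell_density_emeasure1[symmetric] ac_simps)
  finally show ?thesis .
qed

lemma fst_marginal: "distr (density (M1 \<Otimes>\<^sub>M M2) glue) M1 fst = M1"
proof (rule P.distr_density_fst[OF glue_measurable])
  have "AE x in M1. 0 < rest \<or> S1.matched x = 1"
  proof (cases "rest = 0")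
    case True
    then have "(\<Sum>w\<in>W. a w) = 1" by (simp add: rest_def)
    from S1.AE_fully_matched[OF this] show ?thesis by (rule AE_mp) (rule AE_I2, simp)
  qed (use rest_nonneg in simp)
  then show "AE x in M1. (\<integral>\<^sup>+ t. glue (x, t) \<partial>M2) = 1"
    by (rule AE_mp) (rule AE_I2, auto simp: row_integral S1.ennreal_matched intro!: fill_to_one S1.matched_bounds)
qed

lemma snd_marginal: "distr (density (M1 \<Otimes>\<^sub>M M2) glue) M2 snd = M2"
proof (rule P.distr_density_snd[OF glue_measurable])
  have "AE t in M2. 0 < rest \<or> S2.matched t = 1"
  proof (cases "rest = 0")
    case True
    then have "(\<Sum>w\<in>W. a w) = 1" by (simp add: rest_def)
    from S2.AE_fully_matched[OF this] show ?thesis by (rule AE_mp) (rule AE_I2, simp)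
  qed (use rest_nonneg in simp)
  then show "AE t in M2. (\<integral>\<^sup>+ x. glue (x, t) \<partial>M1) = 1"
    by (rule AE_mp) (rule AE_I2, auto simp: column_integral S2.ennreal_matched intro!: fill_to_one S2.matched_bounds)
qed

(* The matched part of the glued coupling has total mass sum a <= 1. *)
lemma matched_cost_le:
  assumes "0 \<le> \<delta>"
  shows "(\<integral>\<^sup>+ p. (\<Sum>w\<in>W. cell_density w * indicator (S w \<times> T w) p * ennreal \<delta>) \<partial>(M1 \<Otimes>\<^sub>M M2)) \<le> ennreal \<delta>"
proof -
  have [measurable]: "w \<in> W \<Longrightarrow> S w \<in> sets M1" "w \<in> W \<Longrightarrow> T w \<in> sets M2" for w
    using S1.sets_part S2.sets_part by auto
  have "(\<integral>\<^sup>+ p. (\<Sum>w\<in>W. cell_density w * indicator (S w \<times> T w) p * ennreal \<delta>) \<partial>(M1 \<Otimes>\<^sub>M M2))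
      = (\<Sum>w\<in>W. (\<integral>\<^sup>+ p. cell_density w * ennreal \<delta> * indicator (S w \<times> T w) p \<partial>(M1 \<Otimes>\<^sub>M M2)))"
    by (subst nn_integral_sum) (auto intro!: sum.cong nn_integral_cong pair_measureI simp: ac_simps)
  also have "\<dots> = (\<Sum>w\<in>W. ennreal (a w) * ennreal \<delta>)"
  proof (intro sum.cong refl)
    fix w assume w: "w \<in> W"
    have "(\<integral>\<^sup>+ p. cell_density w * ennreal \<delta> * indicator (S w \<times> T w) p \<partial>(M1 \<Otimes>\<^sub>M M2))
        = cell_density w * ennreal \<delta> * (emeasure M1 (S w) * emeasure M2 (T w))"
      using w by (subst nn_integral_cmult_indicator) (auto intro!: pair_measureI simp: S2.emeasure_pair_measure_Times)
    also have "\<dots> = ennreal (a w) * ennreal \<delta>" using cell_density_emeasure12[OF w] by (simp add: ac_simps)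
    finally show "(\<integral>\<^sup>+ p. cell_density w * ennreal \<delta> * indicator (S w \<times> T w) p \<partial>(M1 \<Otimes>\<^sub>M M2))
        = ennreal (a w) * ennreal \<delta>" .
  qed
  also have "\<dots> = ennreal (\<Sum>w\<in>W. a w) * ennreal \<delta>"
    using S1.weight_nonneg by (simp add: sum_distrib_right[symmetric] sum_ennreal)
  also have "\<dots> \<le> 1 * ennreal \<delta>" using S1.weight_sum_le_1 by (intro mult_right_mono) auto
  finally show ?thesis by simp
qed

(* The unmatched part is an independent coupling of the unmatched remainders, so a cost that
   splits as h1 x + h2 t integrates to the sum of the separate integrals. *)
lemma unmatched_cost_le:
  fixes h1 :: "'a \<Rightarrow> ennreal" and h2 :: "'b \<Rightarrow> ennreal"
  assumes [measurable]: "h1 \<in> borel_measurable M1" "h2 \<in> borel_measurable M2"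
  shows "(\<integral>\<^sup>+ p. ennreal (1 - S1.matched (fst p)) * ennreal (1 - S2.matched (snd p)) * ennreal (1 / rest)
      * (h1 (fst p) + h2 (snd p)) \<partial>(M1 \<Otimes>\<^sub>M M2))
    \<le> (\<integral>\<^sup>+ x. ennreal (1 - S1.matched x) * h1 x \<partial>M1) + (\<integral>\<^sup>+ t. ennreal (1 - S2.matched t) * h2 t \<partial>M2)"
proof (cases "rest = 0")
  case False
  then have "rest > 0" using rest_nonneg by simp
  then have one: "ennreal (1 / rest) * ennreal rest = 1" by (simp add: ennreal_mult[symmetric])
  define G1 where "G1 x = ennreal (1 - S1.matched x)" for x
  define G2 where "G2 t = ennreal (1 - S2.matched t)" for t
  have [measurable]: "G1 \<in> borel_measurable M1" "G2 \<in> borel_measurable M2"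
    unfolding G1_def G2_def by measurable
  have int_G: "integral\<^sup>N M1 G1 = ennreal rest" "integral\<^sup>N M2 G2 = ennreal rest"
    unfolding G1_def G2_def rest_def using S1.nn_integral_unmatched S2.nn_integral_unmatched by simp_all
  have "(\<integral>\<^sup>+ p. G1 (fst p) * G2 (snd p) * ennreal (1 / rest) * (h1 (fst p) + h2 (snd p)) \<partial>(M1 \<Otimes>\<^sub>M M2))
      = ennreal (1 / rest) * (\<integral>\<^sup>+ p. (G1 (fst p) * h1 (fst p)) * G2 (snd p) \<partial>(M1 \<Otimes>\<^sub>M M2))
      + ennreal (1 / rest) * (\<integral>\<^sup>+ p. G1 (fst p) * (G2 (snd p) * h2 (snd p)) \<partial>(M1 \<Otimes>\<^sub>M M2))"
    by (subst nn_integral_cmult[symmetric], measurable)+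
       (subst nn_integral_add[symmetric], measurable, auto intro!: nn_integral_cong simp: distrib_left ac_simps)
  also have "(\<integral>\<^sup>+ p. (G1 (fst p) * h1 (fst p)) * G2 (snd p) \<partial>(M1 \<Otimes>\<^sub>M M2))
      = (\<integral>\<^sup>+ x. G1 x * h1 x \<partial>M1) * ennreal rest"
    by (subst P.nn_integral_product_fun) (measurable, simp add: int_G)
  also have "(\<integral>\<^sup>+ p. G1 (fst p) * (G2 (snd p) * h2 (snd p)) \<partial>(M1 \<Otimes>\<^sub>M M2))
      = ennreal rest * (\<integral>\<^sup>+ t. G2 t * h2 t \<partial>M2)"
    by (subst P.nn_integral_product_fun) (measurable, simp add: int_G)
  also have "ennreal (1 / rest) * ((\<integral>\<^sup>+ x. G1 x * h1 x \<partial>M1) * ennreal rest)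
      + ennreal (1 / rest) * (ennreal rest * (\<integral>\<^sup>+ t. G2 t * h2 t \<partial>M2))
      = (\<integral>\<^sup>+ x. G1 x * h1 x \<partial>M1) + (\<integral>\<^sup>+ t. G2 t * h2 t \<partial>M2)"
  proof -
    have "ennreal (1 / rest) * (X * ennreal rest) = (ennreal (1 / rest) * ennreal rest) * X"
      "ennreal (1 / rest) * (ennreal rest * X) = (ennreal (1 / rest) * ennreal rest) * X" for X :: ennreal
      by (simp_all only: ac_simps)
    then show ?thesis by (simp only: one mult_1)
  qed
  finally show ?thesis unfolding G1_def G2_def by simp
qed (simp add: rest_def)

lemma glued_cost_le:
  fixes c :: "'a \<times> 'b \<Rightarrow> ennreal" and h1 :: "'a \<Rightarrow> ennreal" and h2 :: "'b \<Rightarrow> ennreal"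
  assumes c[measurable]: "c \<in> borel_measurable (M1 \<Otimes>\<^sub>M M2)" and \<delta>: "0 \<le> \<delta>"
    and on_cells: "\<And>w x t. w \<in> W \<Longrightarrow> x \<in> S w \<Longrightarrow> t \<in> T w \<Longrightarrow> c (x, t) \<le> ennreal \<delta>"
    and split: "\<And>x t. c (x, t) \<le> h1 x + h2 t"
    and h[measurable]: "h1 \<in> borel_measurable M1" "h2 \<in> borel_measurable M2"
  shows "(\<integral>\<^sup>+ p. c p \<partial>density (M1 \<Otimes>\<^sub>M M2) glue) \<le>
    ennreal \<delta> + (\<integral>\<^sup>+ x. ennreal (1 - S1.matched x) * h1 x \<partial>M1) + (\<integral>\<^sup>+ t. ennreal (1 - S2.matched t) * h2 t \<partial>M2)"
proof -
  have [measurable]: "w \<in> W \<Longrightarrow> S w \<in> sets M1" "w \<in> W \<Longrightarrow> T w \<in> sets M2" for w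
    using S1.sets_part S2.sets_part by auto
  define Q where "Q p = (\<Sum>w\<in>W. cell_density w * indicator (S w \<times> T w) p * ennreal \<delta>)" for p
  define U where "U p = ennreal (1 - S1.matched (fst p)) * ennreal (1 - S2.matched (snd p)) * ennreal (1 / rest)"
    for p
  have [measurable]: "Q \<in> borel_measurable (M1 \<Otimes>\<^sub>M M2)" "U \<in> borel_measurable (M1 \<Otimes>\<^sub>M M2)"
    unfolding Q_def U_def by (measurable; auto intro!: pair_measureI)+
  have pointwise: "glue p * c p \<le> Q p + U p * (h1 (fst p) + h2 (snd p))" for p
  proof -
    obtain x t where p: "p = (x, t)" by (cases p)
    have "(\<Sum>w\<in>W. cell_density w * indicator (S w) x * indicator (T w) t * c p) \<le> Q p"
      unfolding Q_def using on_cells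
      by (intro sum_mono) (auto simp: p indicator_def intro: mult_left_mono)
    moreover have "U p * c p \<le> U p * (h1 (fst p) + h2 (snd p))" using split p by (simp add: mult_left_mono)
    ultimately show ?thesis
      unfolding glue_def U_def[symmetric] p by (simp add: distrib_right sum_distrib_right add_mono)
  qed
  have "(\<integral>\<^sup>+ p. c p \<partial>density (M1 \<Otimes>\<^sub>M M2) glue) = (\<integral>\<^sup>+ p. glue p * c p \<partial>(M1 \<Otimes>\<^sub>M M2))"
    by (rule nn_integral_density) measurable
  also have "\<dots> \<le> (\<integral>\<^sup>+ p. Q p + U p * (h1 (fst p) + h2 (snd p)) \<partial>(M1 \<Otimes>\<^sub>M M2))"
    using pointwise by (intro nn_integral_mono)
  also have "\<dots> = (\<integral>\<^sup>+ p. Q p \<partial>(M1 \<Otimes>\<^sub>M M2)) + (\<integral>\<^sup>+ p. U p * (h1 (fst p) + h2 (snd p)) \<partial>(M1 \<Otimes>\<^sub>M M2))"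
    by (rule nn_integral_add) measurable
  also have "\<dots> \<le> ennreal \<delta> + ((\<integral>\<^sup>+ x. ennreal (1 - S1.matched x) * h1 x \<partial>M1)
      + (\<integral>\<^sup>+ t. ennreal (1 - S2.matched t) * h2 t \<partial>M2))"
    unfolding Q_def U_def by (intro add_mono matched_cost_le unmatched_cost_le \<delta> h)
  finally show ?thesis by (simp only: add.assoc)
qed

end

(* 5. Compactness in W1 of sequences with vanishing tails *)

lemma cumulative_split:
  fixes a :: "nat \<Rightarrow> real"
  assumes "\<And>j. 0 \<le> a j" "0 \<le> u" "u < (\<Sum>j<N. a j)"
  shows "\<exists>i<N. (\<Sum>j<i. a j) \<le> u \<and> u < (\<Sum>j<Suc i. a j)"
  using assms(3)
proof (induction N)
  case 0 then show ?case using assms(2) by simp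
next
  case (Suc N)
  show ?case
  proof (cases "u < (\<Sum>j<N. a j)")
    case True then show ?thesis using Suc.IH by (meson less_SucI)
  next
    case False then show ?thesis using Suc.prems by (intro exI[of _ N]) auto
  qed
qed

lemma geometric_gap:
  fixes z :: "nat \<Rightarrow> 'a::metric_space"
  assumes step: "\<And>k. dist (z k) (z (Suc k)) \<le> 1 / 2 ^ Suc k" and "k \<le> n"
  shows "dist (z k) (z n) \<le> 1 / 2 ^ k"
proof -
  have gap: "dist (z k) (z (k + l)) \<le> 1 / 2 ^ k - 1 / 2 ^ (k + l)" for l
  proof (induction l)
    case (Suc l)
    have "dist (z k) (z (k + Suc l)) \<le> dist (z k) (z (k + l)) + dist (z (k + l)) (z (Suc (k + l)))"
      by (simp add: dist_triangle)
    also have "\<dots> \<le> (1 / 2 ^ k - 1 / 2 ^ (k + l)) + 1 / 2 ^ Suc (k + l)" using Suc step by (intro add_mono) auto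
    also have "\<dots> = 1 / 2 ^ k - 1 / 2 ^ (k + Suc l)" by (simp add: field_simps)
    finally show ?case .
  qed simp
  have "dist (z k) (z n) \<le> 1 / 2 ^ k - 1 / 2 ^ n" using gap[of "n - k"] assms(2) by simp
  moreover have "(0::real) \<le> 1 / 2 ^ n" by simp
  ultimately show ?thesis by linarith
qed

lemma geometric_cauchy:
  fixes z :: "nat \<Rightarrow> 'a::metric_space"
  assumes step: "\<And>k. dist (z k) (z (Suc k)) \<le> 1 / 2 ^ Suc k" and inC: "\<And>k. z k \<in> C" and C: "compact C"
  shows "\<exists>y\<in>C. z \<longlonglongrightarrow> y \<and> (\<forall>k. dist (z k) y \<le> 1 / 2 ^ k)"
proof -
  have "Cauchy z"
  proof (rule metric_CauchyI)
    fix e :: real assume e: "e > 0"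
    obtain M where M: "(1/2::real) ^ M < e" using real_arch_pow_inv[OF e] by force
    have "dist (z m) (z n) < e" if "m \<ge> M" "n \<ge> M" for m n
    proof -
      have "dist (z m) (z n) \<le> 1 / 2 ^ min m n"
        using geometric_gap[OF step, of m n] geometric_gap[OF step, of n m]
        by (cases "m \<le> n") (auto simp: dist_commute min_def)
      also have "\<dots> \<le> 1 / 2 ^ M" using that by (intro divide_left_mono power_increasing) auto
      also have "\<dots> < e" using M by (simp add: power_one_over)
      finally show ?thesis .
    qed
    then show "\<exists>M. \<forall>m\<ge>M. \<forall>n\<ge>M. dist (z m) (z n) < e" by blast
  qed
  then obtain y where y: "y \<in> C" "z \<longlonglongrightarrow> y"
    using compact_imp_complete[OF C] inC unfolding complete_def by blast
  have "dist (z k) y \<le> 1 / 2 ^ k" for k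
  proof -
    have "(\<lambda>n. dist (z k) (z (n + k))) \<longlonglongrightarrow> dist (z k) y"
      using LIMSEQ_ignore_initial_segment[OF y(2)] by (intro tendsto_intros)
    moreover have "\<exists>N. \<forall>n\<ge>N. dist (z k) (z (n + k)) \<le> 1 / 2 ^ k" using geometric_gap[OF step] by auto
    ultimately show ?thesis by (rule LIMSEQ_le_const2)
  qed
  then show ?thesis using y by blast
qed

lemma coupling_transport:
  fixes \<pi> :: "('a::metric_space \<times> 'b::topological_space) measure" and Y :: "'b \<Rightarrow> 'a"
  assumes s: "sets \<pi> = sets (borel \<Otimes>\<^sub>M borel)"
    and marg: "distr \<pi> borel fst = \<mu>" "distr \<pi> borel snd = \<kappa>"
    and Y[measurable]: "Y \<in> borel_measurable borel"
  shows "distr \<pi> (borel \<Otimes>\<^sub>M borel) (\<lambda>p. (fst p, Y (snd p))) \<in> couplings \<mu> (distr \<kappa> borel Y)"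
proof -
  let ?g = "\<lambda>p. (fst p, Y (snd p))"
  have g: "?g \<in> measurable \<pi> (borel \<Otimes>\<^sub>M borel)" unfolding measurable_cong_sets[OF s refl] by measurable
  have m_snd: "snd \<in> measurable \<pi> borel" unfolding measurable_cong_sets[OF s refl] by measurable
  have "distr (distr \<pi> (borel \<Otimes>\<^sub>M borel) ?g) borel fst = distr \<pi> borel (fst \<circ> ?g)"
    by (rule distr_distr[OF _ g]) measurable
  then have fst_marg: "distr (distr \<pi> (borel \<Otimes>\<^sub>M borel) ?g) borel fst = \<mu>"
    using marg(1) by (simp add: comp_def)
  have "distr (distr \<pi> (borel \<Otimes>\<^sub>M borel) ?g) borel snd = distr \<pi> borel (Y \<circ> snd)"
    by (subst distr_distr[OF _ g]) (measurable, simp add: comp_def)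
  also have "\<dots> = distr \<kappa> borel Y" unfolding marg(2)[symmetric] by (rule distr_distr[symmetric, OF Y m_snd])
  finally show ?thesis using fst_marg unfolding couplings_def by simp
qed

lemma cost_transport:
  fixes \<pi> :: "('a::metric_space \<times> 'b::topological_space) measure" and Y :: "'b \<Rightarrow> 'a"
  assumes "proper_space TYPE('a)" and s: "sets \<pi> = sets (borel \<Otimes>\<^sub>M borel)"
    and Y[measurable]: "Y \<in> borel_measurable borel"
  shows "cost (distr \<pi> (borel \<Otimes>\<^sub>M borel) (\<lambda>p. (fst p, Y (snd p))))
    = (\<integral>\<^sup>+ p. ennreal (dist (fst p) (Y (snd p))) \<partial>\<pi>)"
proof -
  have g: "(\<lambda>p. (fst p, Y (snd p))) \<in> measurable \<pi> (borel \<Otimes>\<^sub>M borel)"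
    unfolding measurable_cong_sets[OF s refl] by measurable
  have [measurable]: "(\<lambda>p. dist (fst p) (snd p)) \<in> borel_measurable (borel \<Otimes>\<^sub>M (borel :: 'a measure))"
    by (rule borel_measurable_dist_pair[OF assms(1)])
  show ?thesis unfolding cost_def by (subst nn_integral_distr[OF g]) simp_all
qed

(* The core cball x0 K is compact; it is cut into nested finite
   partitions: the cells of level k + 1 are indexed by words of length k + 1 and have diameter at
   most 1/2^(k+1).  q n w is the nu_n-mass of cell w, p w its limit along a diagonal subsequence. *)

locale tight_sequence =
  fixes x0 :: "'a::metric_space" and K :: real and \<nu>s :: "nat \<Rightarrow> 'a measure"
  assumes proper: "proper_space TYPE('a)" and K: "K > 0" and in_P1: "\<And>n. \<nu>s n \<in> P1"
    and tails_vanish: "\<And>e. e > 0 \<Longrightarrow> \<exists>N. \<forall>n\<ge>N. tail x0 K (\<nu>s n) \<le> ennreal e"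
begin

abbreviation core :: "'a set" where "core \<equiv> cball x0 K"

lemma compact_core: "compact core" by (rule compact_cball_proper[OF proper])

definition net_radius :: "nat \<Rightarrow> real" where "net_radius l = 1 / 2 ^ (l + 2)"

lemma net_radius_pos: "net_radius l > 0" unfolding net_radius_def by simp

lemma finite_nets_exist: "\<exists>net. \<forall>l. core \<subseteq> (\<Union>y\<in>set (net l). ball y (net_radius l))"
proof -
  have "\<exists>xs. core \<subseteq> (\<Union>y\<in>set xs. ball y (net_radius l))" for l
  proof -
    have "core \<subseteq> (\<Union>c\<in>core. ball c (net_radius l))" using net_radius_pos by auto
    from compactE_image[OF compact_core _ this] obtain C where "C \<subseteq> core" "finite C" "core \<subseteq> (\<Union>c\<in>C. ball c (net_radius l))"
      by (metis open_ball)
    moreover obtain xs where "set xs = C" using \<open>finite C\<close> finite_list by blast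
    ultimately show ?thesis by blast
  qed
  then show ?thesis by metis
qed

definition net where "net = (SOME net. \<forall>l. core \<subseteq> (\<Union>y\<in>set (net l). ball y (net_radius l)))"

lemma net: "core \<subseteq> (\<Union>y\<in>set (net l). ball y (net_radius l))"
  using someI_ex[OF finite_nets_exist] unfolding net_def by blast

definition net_size where "net_size l = length (net l)"

definition piece where "piece l i = core \<inter> ball (net l ! i) (net_radius l) - (\<Union>j<i. ball (net l ! j) (net_radius l))"

lemma piece_sets: "piece l i \<in> sets borel" unfolding piece_def by (intro sets.Diff sets.Int) auto

lemma piece_cover: assumes "x \<in> core" shows "\<exists>i<net_size l. x \<in> piece l i"
proof -
  obtain y where "y \<in> set (net l)" "x \<in> ball y (net_radius l)" using net assms by blast
  then obtain i where i: "i < net_size l" "x \<in> ball (net l ! i) (net_radius l)" unfolding net_size_def by (metis in_set_conv_nth)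
  define i0 where "i0 = (LEAST i. x \<in> ball (net l ! i) (net_radius l))"
  have "x \<in> ball (net l ! i0) (net_radius l)" unfolding i0_def by (rule LeastI[of _ i]) (rule i(2))
  moreover have "i0 \<le> i" unfolding i0_def by (rule Least_le) (rule i(2))
  moreover have "\<And>j. j < i0 \<Longrightarrow> x \<notin> ball (net l ! j) (net_radius l)" unfolding i0_def using not_less_Least by blast
  ultimately show ?thesis using i assms unfolding piece_def by (intro exI[of _ i0]) auto
qed

lemma piece_disjoint: assumes "i \<noteq> j" shows "piece l i \<inter> piece l j = {}"
proof -
  { fix i j :: nat assume "i < j"
    then have "piece l i \<inter> piece l j = {}" unfolding piece_def by auto }
  then show ?thesis using assms by (metis inf_commute linorder_neqE_nat)
qed

lemma piece_diam: assumes "x \<in> piece l i" "y \<in> piece l i" shows "dist x y \<le> 1 / 2 ^ (l + 1)"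
proof -
  have "dist x y \<le> dist (net l ! i) x + dist (net l ! i) y" by (metis dist_commute dist_triangle)
  also have "\<dots> \<le> net_radius l + net_radius l" using assms unfolding piece_def by (intro add_mono) auto
  also have "\<dots> = 1 / 2 ^ (l + 1)" unfolding net_radius_def by (simp add: field_simps)
  finally show ?thesis .
qed

(* cell (i # w) refines cell w by the i-th piece of level length w; the words of length k index
   the cells of level k, which partition the core. *)
fun cell :: "nat list \<Rightarrow> 'a set" where
  "cell [] = core"
| "cell (i # w) = cell w \<inter> piece (length w) i"

fun words :: "nat \<Rightarrow> nat list set" where
  "words 0 = {[]}"
| "words (Suc k) = (\<lambda>(i, w). i # w) ` ({..<net_size k} \<times> words k)"

lemma words_length: "w \<in> words k \<Longrightarrow> length w = k"
  by (induction k arbitrary: w) auto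

lemma finite_words: "finite (words k)"
  by (induction k) auto

lemma cell_sets: "cell w \<in> sets borel"
  by (induction w) (auto intro: piece_sets)

lemma cell_core: "cell w \<subseteq> core"
  by (induction w) auto

lemma cell_child: "cell (i # w) \<subseteq> cell w" by auto

lemma cell_children: assumes "w \<in> words k" shows "cell w = (\<Union>i<net_size k. cell (i # w))"
proof
  show "cell w \<subseteq> (\<Union>i<net_size k. cell (i # w))"
  proof
    fix x assume x: "x \<in> cell w"
    then obtain i where "i < net_size k" "x \<in> piece k i" using piece_cover cell_core by blast
    then show "x \<in> (\<Union>i<net_size k. cell (i # w))" using x words_length[OF assms] by auto
  qed
qed auto

lemma cell_children_disj: "disjoint_family_on (\<lambda>i. cell (i # w)) I"
  unfolding disjoint_family_on_def using piece_disjoint by auto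

lemma cell_disj: "w \<in> words k \<Longrightarrow> w' \<in> words k \<Longrightarrow> w \<noteq> w' \<Longrightarrow> cell w \<inter> cell w' = {}"
proof (induction k arbitrary: w w')
  case 0 then show ?case by simp
next
  case (Suc k)
  then obtain i v i' v' where w: "w = i # v" "v \<in> words k" and w': "w' = i' # v'" "v' \<in> words k" by auto
  show ?case
  proof (cases "v = v'")
    case True
    then have "i \<noteq> i'" using Suc.prems w w' by auto
    then show ?thesis using w w' True piece_disjoint[of i i'] by auto
  next
    case False
    then have "cell v \<inter> cell v' = {}" using Suc.IH w w' by auto
    then show ?thesis using w w' by auto
  qed
qed

lemma cell_diam: assumes "x \<in> cell (i # w)" "y \<in> cell (i # w)" shows "dist x y \<le> 1 / 2 ^ (length w + 1)"
  using assms piece_diam by auto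

lemma \<nu>s_prob: "prob_space (\<nu>s n)" and \<nu>s_sets: "sets (\<nu>s n) = sets borel"
  using P1_D[OF in_P1[of n]] by auto

definition q where "q n w = measure (\<nu>s n) (cell w)"

lemma q_bounds: "0 \<le> q n w" "q n w \<le> 1"
  unfolding q_def using prob_space.prob_le_1[OF \<nu>s_prob] by auto

lemma q_add: assumes "w \<in> words k" shows "q n w = (\<Sum>i<net_size k. q n (i # w))"
proof -
  interpret prob_space "\<nu>s n" by (rule \<nu>s_prob)
  have "q n w = measure (\<nu>s n) (\<Union>i<net_size k. cell (i # w))" unfolding q_def using cell_children[OF assms] by simp
  also have "\<dots> = (\<Sum>i<net_size k. measure (\<nu>s n) (cell (i # w)))"
    using cell_sets \<nu>s_sets cell_children_disj cell_sets[of "_ # w"] by (intro measure_finite_Union) auto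
  finally show ?thesis unfolding q_def .
qed

lemma q_empty: "cell w = {} \<Longrightarrow> q n w = 0" unfolding q_def by simp


lemma sum_words:
  assumes add: "\<And>k w. w \<in> words k \<Longrightarrow> g w = (\<Sum>i<net_size k. g (i # w))"
  shows "(\<Sum>w\<in>words k. g w) = g []"
proof (induction k)
  case 0 then show ?case by simp
next
  case (Suc k)
  have inj: "inj_on (\<lambda>x. fst x # snd x) ({..<net_size k} \<times> words k)" by (auto simp: inj_on_def)
  have "(\<Sum>w\<in>words (Suc k). g w) = (\<Sum>(i, w)\<in>{..<net_size k} \<times> words k. g (i # w))"
    by (simp add: sum.reindex[OF inj] split_def comp_def)
  also have "\<dots> = (\<Sum>i<net_size k. \<Sum>w\<in>words k. g (i # w))" by (rule sum.cartesian_product[symmetric])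
  also have "\<dots> = (\<Sum>w\<in>words k. \<Sum>i<net_size k. g (i # w))" by (rule sum.swap)
  also have "\<dots> = (\<Sum>w\<in>words k. g w)" using add by (intro sum.cong) auto
  finally show ?case using Suc by simp
qed

(* Vanishing tails force the mass outside the core to vanish, so q n [] tends to 1. *)
lemma compl_small: assumes e: "e > 0" shows "\<exists>N. \<forall>n\<ge>N. measure (\<nu>s n) (UNIV - core) \<le> e"
proof -
  obtain N where N: "\<And>n. n \<ge> N \<Longrightarrow> tail x0 K (\<nu>s n) \<le> ennreal (e * K)" using tails_vanish[of "e * K"] e K by auto
  have "measure (\<nu>s n) (UNIV - core) \<le> e" if n: "n \<ge> N" for n
  proof -
    interpret prob_space "\<nu>s n" by (rule \<nu>s_prob)
    have sB: "UNIV - core \<in> sets (\<nu>s n)" using \<nu>s_sets by simp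
    have "ennreal K * emeasure (\<nu>s n) (UNIV - core) = (\<integral>\<^sup>+ y. ennreal K * indicator (UNIV - core) y \<partial>\<nu>s n)"
      by (rule nn_integral_cmult_indicator[symmetric]) (rule sB)
    also have "\<dots> \<le> tail x0 K (\<nu>s n)" unfolding tail_def
      by (intro nn_integral_mono) (auto simp: indicator_def ennreal_leI)
    also have "\<dots> \<le> ennreal (e * K)" by (rule N[OF n])
    finally have "ennreal (K * measure (\<nu>s n) (UNIV - core)) \<le> ennreal (e * K)"
      using K by (simp add: emeasure_eq_measure ennreal_mult)
    then have "K * measure (\<nu>s n) (UNIV - core) \<le> e * K" using e K by (simp add: ennreal_le_iff)
    then show ?thesis using K by (simp add: mult.commute)
  qed
  then show ?thesis by blast
qed

lemma q_nil_lim: "(\<lambda>n. q n []) \<longlonglongrightarrow> 1"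
proof (rule LIMSEQ_I)
  fix e :: real assume e: "e > 0"
  obtain N where N: "\<And>n. n \<ge> N \<Longrightarrow> measure (\<nu>s n) (UNIV - core) \<le> e / 2" using compl_small[of "e/2"] e by auto
  have "norm (q n [] - 1) < e" if "n \<ge> N" for n
  proof -
    interpret prob_space "\<nu>s n" by (rule \<nu>s_prob)
    have "space (\<nu>s n) = UNIV" using \<nu>s_sets sets_eq_imp_space_eq by fastforce
    then have "measure (\<nu>s n) (UNIV - core) = 1 - q n []"
      unfolding q_def using prob_compl[of core] \<nu>s_sets by simp
    then show ?thesis using N[OF that] e q_bounds[of n "[]"] by simp
  qed
  then show "\<exists>N. \<forall>n\<ge>N. norm (q n [] - 1) < e" by blast
qed

(* Cell masses are bounded, so a diagonal subsequence makes them converge for all of the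
   countably many words simultaneously. *)
definition mass_converges where "mass_converges = (\<lambda>k s. convergent (\<lambda>j. q (s j) (from_nat k)))"

definition diag_subseq where "diag_subseq = subseqs.diagseq mass_converges"

lemma diag_subseq_props: "strict_mono diag_subseq" "convergent (\<lambda>j. q (diag_subseq j) w)"
proof -
  interpret D: subseqs mass_converges
  proof
    fix k and s :: "nat \<Rightarrow> nat" assume "strict_mono s"
    have sc: "seq_compact {0..1::real}" by (rule compact_imp_seq_compact) simp
    have mem: "\<And>j. q (s j) (from_nat k) \<in> {0..1}" using q_bounds by auto
    from sc[unfolded seq_compact_def, rule_format, of "\<lambda>j. q (s j) (from_nat k)", OF mem]
    obtain l r' where "strict_mono r'" "((\<lambda>j. q (s j) (from_nat k)) \<circ> r') \<longlonglongrightarrow> l"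
      by blast
    then show "\<exists>r'. strict_mono r' \<and> mass_converges k (s \<circ> r')"
      unfolding mass_converges_def convergent_def by (auto simp: comp_def)
  qed
  show "strict_mono diag_subseq" unfolding diag_subseq_def by (rule D.subseq_diagseq)
  define k where "k = to_nat w"
  have "mass_converges k (D.diagseq \<circ> (+) (Suc k))"
  proof (rule D.diagseq_holds)
    fix r s n assume "strict_mono (r :: nat \<Rightarrow> nat)" "mass_converges n s"
    then obtain l where "(\<lambda>j. q (s j) (from_nat n)) \<longlonglongrightarrow> l" unfolding mass_converges_def convergent_def by blast
    from LIMSEQ_subseq_LIMSEQ[OF this \<open>strict_mono r\<close>]
    show "mass_converges n (s \<circ> r)" unfolding mass_converges_def convergent_def by (auto simp: comp_def)
  qed
  then obtain l where "(\<lambda>j. q (D.diagseq (Suc k + j)) w) \<longlonglongrightarrow> l"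
    unfolding mass_converges_def convergent_def k_def by auto
  then have "(\<lambda>j. q (D.diagseq (j + Suc k)) w) \<longlonglongrightarrow> l" by (simp add: add.commute)
  then have "(\<lambda>j. q (D.diagseq j) w) \<longlonglongrightarrow> l" by (rule LIMSEQ_offset)
  then show "convergent (\<lambda>j. q (diag_subseq j) w)" unfolding diag_subseq_def convergent_def by blast
qed

definition p where "p w = lim (\<lambda>j. q (diag_subseq j) w)"

lemma p_lim: "(\<lambda>j. q (diag_subseq j) w) \<longlonglongrightarrow> p w"
  unfolding p_def using diag_subseq_props(2) by (simp add: convergent_LIMSEQ_iff)

lemma p_bounds: "0 \<le> p w" "p w \<le> 1"
proof -
  have "\<exists>N. \<forall>n\<ge>N. 0 \<le> q (diag_subseq n) w" using q_bounds by auto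
  from LIMSEQ_le_const[OF p_lim this] show "0 \<le> p w" .
  have "\<exists>N. \<forall>n\<ge>N. q (diag_subseq n) w \<le> 1" using q_bounds by auto
  from LIMSEQ_le_const2[OF p_lim this] show "p w \<le> 1" .
qed

lemma p_add: assumes "w \<in> words k" shows "p w = (\<Sum>i<net_size k. p (i # w))"
proof -
  have "(\<lambda>j. \<Sum>i<net_size k. q (diag_subseq j) (i # w)) \<longlonglongrightarrow> (\<Sum>i<net_size k. p (i # w))"
    by (intro tendsto_sum p_lim)
  moreover have "(\<lambda>j. \<Sum>i<net_size k. q (diag_subseq j) (i # w)) = (\<lambda>j. q (diag_subseq j) w)"
    using q_add[OF assms] by simp
  ultimately have "(\<lambda>j. q (diag_subseq j) w) \<longlonglongrightarrow> (\<Sum>i<net_size k. p (i # w))" by simp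
  from LIMSEQ_unique[OF p_lim this] show ?thesis .
qed

lemma p_nil: "p [] = 1"
proof -
  have "((\<lambda>n. q n []) \<circ> diag_subseq) \<longlonglongrightarrow> 1" by (rule LIMSEQ_subseq_LIMSEQ[OF q_nil_lim diag_subseq_props(1)])
  then have "(\<lambda>j. q (diag_subseq j) []) \<longlonglongrightarrow> 1" by (simp add: comp_def)
  from LIMSEQ_unique[OF p_lim this] show ?thesis .
qed

lemma p_empty: assumes "cell w = {}" shows "p w = 0"
proof -
  have "(\<lambda>j. q (diag_subseq j) w) = (\<lambda>j. 0)" using q_empty[OF assms] by simp
  then have "(\<lambda>j. q (diag_subseq j) w) \<longlonglongrightarrow> 0" by simp
  from LIMSEQ_unique[OF p_lim this] show ?thesis .
qed

lemma sum_p: "(\<Sum>w\<in>words k. p w) = 1"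
  using sum_words[of p k] p_add p_nil by simp


(* slot w: an interval of length p w in [0,1).  The slots of each level partition [0,1) and
   are nested along the refinement of cells. *)
fun slot_start :: "nat list \<Rightarrow> real" where
  "slot_start [] = 0"
| "slot_start (i # w) = slot_start w + (\<Sum>j<i. p (j # w))"

definition slot where "slot w = {slot_start w ..< slot_start w + p w}"

lemma child_bounds: assumes "w \<in> words k" "i < net_size k"
  shows "slot_start w \<le> slot_start (i # w)" "slot_start (i # w) + p (i # w) \<le> slot_start w + p w"
proof -
  show "slot_start w \<le> slot_start (i # w)" using p_bounds by (simp add: sum_nonneg)
  have "slot_start (i # w) + p (i # w) = slot_start w + (\<Sum>j<Suc i. p (j # w))" by simp
  also have "(\<Sum>j<Suc i. p (j # w)) \<le> (\<Sum>j<net_size k. p (j # w))"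
    using assms(2) p_bounds by (intro sum_mono2) auto
  finally show "slot_start (i # w) + p (i # w) \<le> slot_start w + p w" using p_add[OF assms(1)] by simp
qed

lemma slot_child: "w \<in> words k \<Longrightarrow> i < net_size k \<Longrightarrow> slot (i # w) \<subseteq> slot w"
  using child_bounds[of w k i] unfolding slot_def by (auto simp del: slot_start.simps)

lemma slot_bounds: "w \<in> words k \<Longrightarrow> 0 \<le> slot_start w \<and> slot_start w + p w \<le> 1"
proof (induction k arbitrary: w)
  case 0 then show ?case by (simp add: p_nil)
next
  case (Suc k)
  then obtain i v where w: "w = i # v" "i < net_size k" "v \<in> words k" by auto
  then show ?case using Suc.IH[OF w(3)] child_bounds[OF w(3) w(2)] by (auto simp del: slot_start.simps)
qed

lemma slot_subset: "w \<in> words k \<Longrightarrow> slot w \<subseteq> {0..<1}"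
  using slot_bounds[of w k] unfolding slot_def by auto

lemma slot_cover: assumes w: "w \<in> words k" and t: "t \<in> slot w" shows "\<exists>i<net_size k. t \<in> slot (i # w)"
proof -
  have "0 \<le> t - slot_start w" "t - slot_start w < (\<Sum>j<net_size k. p (j # w))" using t p_add[OF w] unfolding slot_def by auto
  from cumulative_split[of "\<lambda>j. p (j # w)", OF p_bounds(1) this]
  obtain i where "i < net_size k" "(\<Sum>j<i. p (j # w)) \<le> t - slot_start w" "t - slot_start w < (\<Sum>j<Suc i. p (j # w))" by blast
  then show ?thesis unfolding slot_def by (intro exI[of _ i]) auto
qed

lemma slot_disjoint: "w \<in> words k \<Longrightarrow> w' \<in> words k \<Longrightarrow> w \<noteq> w' \<Longrightarrow> slot w \<inter> slot w' = {}"
proof (induction k arbitrary: w w')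
  case 0 then show ?case by simp
next
  case (Suc k)
  then obtain i v i' v' where w: "w = i # v" "i < net_size k" "v \<in> words k" and w': "w' = i' # v'" "i' < net_size k" "v' \<in> words k" by auto
  show ?case
  proof (cases "v = v'")
    case True
    then have ne: "i \<noteq> i'" using Suc.prems w w' by auto
    have sep: "slot (a # v) \<inter> slot (b # v) = {}" if "a < b" "b < net_size k" for a b
    proof -
      have "(\<Sum>j<Suc a. p (j # v)) \<le> (\<Sum>j<b. p (j # v))"
        using that p_bounds by (intro sum_mono2) auto
      then have "slot_start (a # v) + p (a # v) \<le> slot_start (b # v)" by simp
      then show ?thesis unfolding slot_def by auto
    qed
    show ?thesis using ne sep[of i i'] sep[of i' i] w w' True by (cases "i < i'") (auto simp del: slot_start.simps)
  next
    case False
    then have "slot v \<inter> slot v' = {}" using Suc.IH w w' by auto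
    then show ?thesis using w w' slot_child[of v k i] slot_child[of v' k i'] by auto
  qed
qed

lemma slot_nil: "slot [] = {0..<1}" unfolding slot_def by (simp add: p_nil)

lemma slot_exists: "t \<in> {0..<1} \<Longrightarrow> \<exists>w\<in>words k. t \<in> slot w"
proof (induction k)
  case 0 then show ?case by (simp add: slot_nil)
next
  case (Suc k)
  then obtain w where "w \<in> words k" "t \<in> slot w" by blast
  then obtain i where "i < net_size k" "t \<in> slot (i # w)" using slot_cover by blast
  then show ?case using \<open>w \<in> words k\<close> by (intro bexI[of _ "i # w"]) auto
qed

definition address where "address t k = (THE w. w \<in> words k \<and> t \<in> slot w)"

lemma address_unique: assumes "w \<in> words k" "t \<in> slot w" shows "address t k = w"
  unfolding address_def
proof (rule the_equality)
  show "w \<in> words k \<and> t \<in> slot w" using assms by simp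
  fix w' assume "w' \<in> words k \<and> t \<in> slot w'"
  then show "w' = w" using slot_disjoint[of w k w'] assms by blast
qed

lemma address_props: assumes "t \<in> {0..<1}" shows "address t k \<in> words k" "t \<in> slot (address t k)"
  using slot_exists[OF assms, of k] address_unique by auto

lemma address_Suc: assumes "t \<in> {0..<1}" shows "\<exists>i. address t (Suc k) = i # address t k"
proof -
  obtain i v where pv: "address t (Suc k) = i # v" "i < net_size k" "v \<in> words k" using address_props(1)[OF assms, of "Suc k"] by auto
  have "t \<in> slot (i # v)" using address_props(2)[OF assms, of "Suc k"] pv by simp
  then have "t \<in> slot v" using slot_child[OF pv(3) pv(2)] by auto
  then have "address t k = v" by (rule address_unique[OF pv(3)])
  then show ?thesis using pv by auto
qed

lemma slot_mass_pos: "t \<in> slot w \<Longrightarrow> p w > 0" unfolding slot_def by auto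

definition representative where "representative w = (if cell w = {} then x0 else (SOME x. x \<in> cell w))"

lemma representative_cell: assumes "p w > 0" shows "representative w \<in> cell w"
proof -
  have "cell w \<noteq> {}" using p_empty assms by force
  then show ?thesis unfolding representative_def by (auto intro: someI_ex)
qed

definition approx :: "nat \<Rightarrow> real \<Rightarrow> 'a" where
  "approx k t = (if t \<in> {0..<1} then representative (address t (Suc k)) else x0)"

lemma approx_cell: assumes "t \<in> {0..<1}" shows "approx k t \<in> cell (address t (Suc k))"
  unfolding approx_def using assms address_props[OF assms, of "Suc k"]
  by (simp add: representative_cell slot_mass_pos)

lemma approx_core: "t \<in> {0..<1} \<Longrightarrow> approx k t \<in> core" using approx_cell cell_core by blast

lemma approx_step: assumes t: "t \<in> {0..<1}" shows "dist (approx k t) (approx (Suc k) t) \<le> 1 / 2 ^ Suc k"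
proof -
  obtain i where i: "address t (Suc (Suc k)) = i # address t (Suc k)" using address_Suc[OF t] by blast
  obtain j where j: "address t (Suc k) = j # address t k" using address_Suc[OF t] by blast
  have "approx (Suc k) t \<in> cell (address t (Suc k))" using approx_cell[OF t, of "Suc k"] i cell_child by auto
  moreover have "approx k t \<in> cell (address t (Suc k))" using approx_cell[OF t] .
  ultimately have "dist (approx k t) (approx (Suc k) t) \<le> 1 / 2 ^ (length (address t k) + 1)"
    using cell_diam j by metis
  also have "length (address t k) = k" using words_length address_props(1)[OF t] by blast
  finally show ?thesis by simp
qed

definition quantile_map where "quantile_map t = (if t \<in> {0..<1} then lim (\<lambda>k. approx k t) else x0)"

lemma quantile_map_props: assumes t: "t \<in> {0..<1}"
  shows "quantile_map t \<in> core" "(\<lambda>k. approx k t) \<longlonglongrightarrow> quantile_map t" "\<And>k. dist (approx k t) (quantile_map t) \<le> 1 / 2 ^ k"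
proof -
  obtain y where y: "y \<in> core" "(\<lambda>k. approx k t) \<longlonglongrightarrow> y" "\<forall>k. dist (approx k t) y \<le> 1 / 2 ^ k"
    using geometric_cauchy[of "\<lambda>k. approx k t" core, OF approx_step[OF t] approx_core[OF t] compact_core] by blast
  have "quantile_map t = y" unfolding quantile_map_def using t y(2) by (simp add: limI)
  then show "quantile_map t \<in> core" "(\<lambda>k. approx k t) \<longlonglongrightarrow> quantile_map t" "\<And>k. dist (approx k t) (quantile_map t) \<le> 1 / 2 ^ k" using y by auto
qed

lemma quantile_map_dist: "dist x0 (quantile_map t) \<le> K"
  using quantile_map_props(1)[of t] K unfolding quantile_map_def by (cases "t \<in> {0..<1}") auto

(* On [0,1), approx k is constant on each of the finitely many slots of level k+1. *)
lemma approx_preimage: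
  "approx k -` S = (\<Union>w\<in>{w\<in>words (Suc k). representative w \<in> S}. slot w) \<union> (if x0 \<in> S then - {0..<1} else {})"
proof (intro equalityI subsetI)
  fix t assume t: "t \<in> approx k -` S"
  show "t \<in> (\<Union>w\<in>{w\<in>words (Suc k). representative w \<in> S}. slot w) \<union> (if x0 \<in> S then - {0..<1} else {})"
  proof (cases "t \<in> {0..<1}")
    case True
    then have "address t (Suc k) \<in> words (Suc k)" "t \<in> slot (address t (Suc k))"
      "representative (address t (Suc k)) \<in> S"
      using address_props[OF True, of "Suc k"] t unfolding approx_def by (auto simp del: words.simps)
    then show ?thesis by blast
  qed (use t in \<open>auto simp: approx_def\<close>)
next
  fix t assume t: "t \<in> (\<Union>w\<in>{w\<in>words (Suc k). representative w \<in> S}. slot w) \<union> (if x0 \<in> S then - {0..<1} else {})"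
  show "t \<in> approx k -` S"
  proof (cases "t \<in> (\<Union>w\<in>{w\<in>words (Suc k). representative w \<in> S}. slot w)")
    case True
    then obtain w where w: "w \<in> words (Suc k)" "representative w \<in> S" "t \<in> slot w" by blast
    then have "t \<in> {0..<1}" using slot_subset by blast
    moreover have "address t (Suc k) = w" by (rule address_unique[OF w(1) w(3)])
    ultimately show ?thesis using w unfolding approx_def by simp
  next
    case False
    then show ?thesis using t by (auto simp: approx_def split: if_splits)
  qed
qed

lemma approx_measurable: "approx k \<in> borel_measurable borel"
proof (rule borel_measurableI)
  fix S :: "'a set"
  have "finite {w\<in>words (Suc k). representative w \<in> S}" using finite_words by simp
  then show "approx k -` S \<inter> space borel \<in> sets borel"
    unfolding space_borel Int_UNIV_right approx_preimage by (intro sets.Un sets.finite_UN) (auto simp: slot_def)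
qed

lemma quantile_map_measurable: "quantile_map \<in> borel_measurable borel"
proof (rule borel_measurable_LIMSEQ_metric[OF approx_measurable])
  show "(\<lambda>k. approx k t) \<longlonglongrightarrow> quantile_map t" for t
    using quantile_map_props(2)[of t] by (cases "t \<in> {0..<1}") (auto simp: approx_def quantile_map_def)
qed

(* The uniform distribution on [0,1) gives each slot w the mass p w; the limit measure is its
   image under quantile_map. *)
definition unif :: "real measure" where "unif = density lborel (indicator {0..<1})"

lemma sets_unif: "sets unif = sets borel" unfolding unif_def by simp

lemma emeasure_unif_slot: assumes "w \<in> words k" shows "emeasure unif (slot w) = ennreal (p w)"
proof -
  have "emeasure unif (slot w) = (\<integral>\<^sup>+ t. indicator {0..<1} t * indicator (slot w) t \<partial>lborel)"
    unfolding unif_def by (rule emeasure_density) (auto simp: slot_def)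
  also have "\<dots> = (\<integral>\<^sup>+ t. indicator (slot w) t \<partial>lborel)"
    using slot_subset[OF assms] by (intro nn_integral_cong) (auto simp: indicator_def)
  also have "\<dots> = ennreal (p w)" unfolding slot_def using p_bounds by simp
  finally show ?thesis .
qed

lemma prob_space_unif: "prob_space unif"
proof (rule prob_spaceI)
  have "emeasure unif UNIV = (\<integral>\<^sup>+ t. indicator {0..<1::real} t * indicator UNIV t \<partial>lborel)"
    unfolding unif_def by (subst emeasure_density) auto
  also have "\<dots> = (\<integral>\<^sup>+ t. indicator {0..<1::real} t \<partial>lborel)" by simp
  also have "\<dots> = emeasure lborel {0..<1::real}" by (rule nn_integral_indicator) simp
  also have "\<dots> = 1" by simp
  finally show "emeasure unif (space unif) = 1" by (simp add: unif_def)
qed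

lemma measure_unif_slot: "w \<in> words k \<Longrightarrow> measure unif (slot w) = p w"
  using emeasure_unif_slot p_bounds by (simp add: measure_def)

definition limit_measure where "limit_measure = distr unif borel quantile_map"

lemma quantile_map_measurable_unif: "quantile_map \<in> measurable unif borel"
  using quantile_map_measurable measurable_cong_sets[OF sets_unif refl] by blast

lemma limit_measure_P1: "limit_measure \<in> P1"
proof -
  have "prob_space limit_measure" unfolding limit_measure_def by (rule prob_space.prob_space_distr[OF prob_space_unif quantile_map_measurable_unif])
  moreover have "sets limit_measure = sets borel" unfolding limit_measure_def by simp
  moreover have "(\<integral>\<^sup>+ x. ennreal (dist x0 x) \<partial>limit_measure) < \<infinity>"
  proof -
    have "(\<integral>\<^sup>+ x. ennreal (dist x0 x) \<partial>limit_measure) = (\<integral>\<^sup>+ t. ennreal (dist x0 (quantile_map t)) \<partial>unif)"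
      unfolding limit_measure_def by (rule nn_integral_distr[OF quantile_map_measurable_unif]) measurable
    also have "\<dots> \<le> (\<integral>\<^sup>+ t. ennreal K \<partial>unif)" using quantile_map_dist by (intro nn_integral_mono) (simp add: ennreal_leI)
    also have "\<dots> = ennreal K" using prob_space.emeasure_space_1[OF prob_space_unif] by simp
    also have "\<dots> < \<infinity>" by simp
    finally show ?thesis .
  qed
  ultimately show ?thesis unfolding P1_def by blast
qed

lemma matched_part_cells: "matched_part (\<nu>s n) (words k) cell (\<lambda>w. min (p w) (q n w))"
proof (rule matched_part.intro[OF \<nu>s_prob], rule matched_part_axioms.intro)
  show "finite (words k)" by (rule finite_words)
  show "cell w \<in> sets (\<nu>s n)" for w using cell_sets \<nu>s_sets by simp
  show "disjoint_family_on cell (words k)" unfolding disjoint_family_on_def using cell_disj by blast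
  show "0 \<le> min (p w) (q n w)" for w using p_bounds q_bounds by simp
  show "min (p w) (q n w) \<le> measure (\<nu>s n) (cell w)" for w unfolding q_def by simp
qed

lemma matched_part_slots: "matched_part unif (words k) slot (\<lambda>w. min (p w) (q n w))"
proof (rule matched_part.intro[OF prob_space_unif], rule matched_part_axioms.intro)
  show "finite (words k)" by (rule finite_words)
  show "slot w \<in> sets unif" for w using sets_unif by (simp add: slot_def)
  show "disjoint_family_on slot (words k)" unfolding disjoint_family_on_def using slot_disjoint by blast
  show "0 \<le> min (p w) (q n w)" for w using p_bounds q_bounds by simp
  show "min (p w) (q n w) \<le> measure unif (slot w)" if "w \<in> words k" for w
    using measure_unif_slot[OF that] by simp
qed

lemma cell_slot_close:
  assumes w: "w \<in> words (Suc k)" and x: "x \<in> cell w" and t: "t \<in> slot w"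
  shows "dist x (quantile_map t) \<le> 2 / 2 ^ k"
proof -
  have t01: "t \<in> {0..<1}" using t slot_subset w by blast
  have address: "address t (Suc k) = w" using address_unique w t by blast
  obtain i v where wv: "w = i # v" "v \<in> words k" using w by auto
  have "representative w \<in> cell w" by (rule representative_cell[OF slot_mass_pos[OF t]])
  then have "dist x (representative w) \<le> 1 / 2 ^ (k + 1)"
    using cell_diam[of x i v "representative w"] x wv words_length[OF wv(2)] by simp
  moreover have "dist (representative w) (quantile_map t) \<le> 1 / 2 ^ k"
    using quantile_map_props(3)[OF t01, of k] address t01 unfolding approx_def by simp
  moreover have "1 / 2 ^ (k + 1) + 1 / 2 ^ k \<le> (2 / 2 ^ k :: real)" by (simp add: field_simps)
  ultimately show ?thesis using dist_triangle[of x "quantile_map t" "representative w"] by linarith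
qed

definition unmatched_mass :: "nat \<Rightarrow> nat \<Rightarrow> real" where
  "unmatched_mass k n = 1 - (\<Sum>w\<in>words (Suc k). min (p w) (q n w))"

lemma unmatched_mass_nonneg: "0 \<le> unmatched_mass k n"
  using matched_part.weight_sum_le_1[OF matched_part_cells[of n "Suc k"]]
  unfolding unmatched_mass_def by linarith

lemma glued_limit_coupling:
  obtains \<pi> where "\<pi> \<in> couplings (\<nu>s n) limit_measure"
    "cost \<pi> \<le> ennreal (2 / 2 ^ k + 2 * K * unmatched_mass k n) + tail x0 K (\<nu>s n)"
proof -
  interpret G: glued_coupling "\<nu>s n" unif "words (Suc k)" cell slot "\<lambda>w. min (p w) (q n w)"
    by (intro glued_coupling.intro matched_part_cells matched_part_slots)
  define r where "r = unmatched_mass k n"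
  have r: "0 \<le> r" "r = 1 - (\<Sum>w\<in>words (Suc k). min (p w) (q n w))"
    unfolding r_def by (rule unmatched_mass_nonneg) (simp only: unmatched_mass_def)
  define \<pi>' where "\<pi>' = density (\<nu>s n \<Otimes>\<^sub>M unif) G.glue"
  define \<pi> where "\<pi> = distr \<pi>' (borel \<Otimes>\<^sub>M borel) (\<lambda>p. (fst p, quantile_map (snd p)))"
  have s\<pi>': "sets \<pi>' = sets (borel \<Otimes>\<^sub>M borel)"
    unfolding \<pi>'_def sets_density by (rule sets_pair_measure_cong[OF \<nu>s_sets sets_unif])
  have "distr \<pi>' borel fst = distr \<pi>' (\<nu>s n) fst" by (rule distr_cong) (auto simp: \<nu>s_sets)
  moreover have "distr \<pi>' borel snd = distr \<pi>' unif snd" by (rule distr_cong) (auto simp: sets_unif)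
  ultimately have marginals: "distr \<pi>' borel fst = \<nu>s n" "distr \<pi>' borel snd = unif"
    unfolding \<pi>'_def using G.fst_marginal G.snd_marginal by simp_all
  have "(\<lambda>p. (fst p, quantile_map (snd p))) \<in> measurable (\<nu>s n \<Otimes>\<^sub>M unif) (borel \<Otimes>\<^sub>M borel)"
    using quantile_map_measurable
    unfolding measurable_cong_sets[OF sets_pair_measure_cong[OF \<nu>s_sets sets_unif] refl] by measurable
  from measurable_comp[OF this borel_measurable_dist_pair[OF proper]]
  have cost_measurable: "(\<lambda>p. ennreal (dist (fst p) (quantile_map (snd p)))) \<in> borel_measurable (\<nu>s n \<Otimes>\<^sub>M unif)"
    by (simp add: comp_def)
  have "cost \<pi> = (\<integral>\<^sup>+ p. ennreal (dist (fst p) (quantile_map (snd p))) \<partial>\<pi>')"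
    unfolding \<pi>_def by (rule cost_transport[OF proper s\<pi>' quantile_map_measurable])
  also have "\<dots> \<le> ennreal (2 / 2 ^ k) + (\<integral>\<^sup>+ x. ennreal (1 - G.S1.matched x) * ennreal (dist x0 x) \<partial>\<nu>s n)
        + (\<integral>\<^sup>+ t. ennreal (1 - G.S2.matched t) * ennreal K \<partial>unif)"
    unfolding \<pi>'_def
  proof (rule G.glued_cost_le[OF cost_measurable])
    show "(\<lambda>x. ennreal (dist x0 x)) \<in> borel_measurable (\<nu>s n)"
      by (rule borel_measurable_sets_borel[OF \<nu>s_sets]) measurable
    have "dist x (quantile_map t) \<le> dist x0 x + K" for x t
      using quantile_map_dist[of t] dist_triangle[of x "quantile_map t" x0] by (simp add: dist_commute)
    then show "ennreal (dist (fst (x, t)) (quantile_map (snd (x, t)))) \<le> ennreal (dist x0 x) + ennreal K" for x t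
      using K by (simp add: ennreal_plus[symmetric] ennreal_leI del: ennreal_plus)
    fix w x t assume "w \<in> words (Suc k)" "x \<in> cell w" "t \<in> slot w"
    then show "ennreal (dist (fst (x, t)) (quantile_map (snd (x, t)))) \<le> ennreal (2 / 2 ^ k)"
      using cell_slot_close by (simp add: ennreal_leI del: words.simps)
  qed simp_all
  also have "(\<integral>\<^sup>+ x. ennreal (1 - G.S1.matched x) * ennreal (dist x0 x) \<partial>\<nu>s n)
      \<le> ennreal (K * r) + tail x0 K (\<nu>s n)"
    unfolding r(2) using K by (intro unmatched_moment_le[OF matched_part_cells \<nu>s_sets]) simp
  also have "(\<integral>\<^sup>+ t. ennreal (1 - G.S2.matched t) * ennreal K \<partial>unif) = ennreal r * ennreal K"
    unfolding r(2) by (subst nn_integral_multc) (measurable, simp only: G.S2.nn_integral_unmatched)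
  also have "ennreal r * ennreal K = ennreal (K * r)" using K r(1) by (simp add: ennreal_mult mult.commute)
  finally have "cost \<pi> \<le> ennreal (2 / 2 ^ k) + (ennreal (K * r) + tail x0 K (\<nu>s n)) + ennreal (K * r)"
    by (simp add: add_mono)
  also have "\<dots> = ennreal (2 / 2 ^ k + 2 * K * r) + tail x0 K (\<nu>s n)"
    using K r(1) by (simp add: ennreal_plus[symmetric] algebra_simps del: ennreal_plus)
  finally show ?thesis
    using that coupling_transport[OF s\<pi>' marginals quantile_map_measurable]
    unfolding \<pi>_def limit_measure_def r_def by blast
qed

lemma w1_limit_measure_le:
  "w1 (\<nu>s n) limit_measure \<le> 2 / 2 ^ k + 2 * K * unmatched_mass k n + enn2real (tail x0 K (\<nu>s n))"
proof -
  obtain \<pi> where \<pi>: "\<pi> \<in> couplings (\<nu>s n) limit_measure"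
    "cost \<pi> \<le> ennreal (2 / 2 ^ k + 2 * K * unmatched_mass k n) + tail x0 K (\<nu>s n)"
    by (rule glued_limit_coupling)
  have "tail x0 K (\<nu>s n) < \<infinity>" using tail_le_moment moment_P1_finite[OF in_P1] by (rule le_less_trans)
  then show ?thesis using w1_le_cost_plus[OF \<pi>] K unmatched_mass_nonneg[of k n] by simp
qed

lemma unmatched_mass_vanishes: "(\<lambda>n. unmatched_mass k (diag_subseq n)) \<longlonglongrightarrow> 0"
proof -
  have "(\<lambda>n. unmatched_mass k (diag_subseq n)) \<longlonglongrightarrow> 1 - (\<Sum>w\<in>words (Suc k). min (p w) (p w))"
    unfolding unmatched_mass_def by (intro tendsto_intros p_lim)
  then show ?thesis using sum_p[of "Suc k"] by simp
qed

lemma w1_limit_measure_tendsto: "(\<lambda>n. w1 (\<nu>s (diag_subseq n)) limit_measure) \<longlonglongrightarrow> 0"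
proof (rule LIMSEQ_I)
  fix e :: real assume e: "e > 0"
  obtain k where "(1/2::real) ^ k < e / 6" using real_arch_pow_inv[of "e/6" "1/2"] e by auto
  then have k: "2 / 2 ^ k < e / 3" by (simp add: power_one_over)
  obtain N1 where N1: "\<And>n. n \<ge> N1 \<Longrightarrow> norm (unmatched_mass k (diag_subseq n) - 0) < e / (6 * K)"
    using LIMSEQ_D[OF unmatched_mass_vanishes[of k], of "e / (6 * K)"] e K by auto
  obtain N2 where N2: "\<And>n. n \<ge> N2 \<Longrightarrow> tail x0 K (\<nu>s n) \<le> ennreal (e / 4)"
    using tails_vanish[of "e / 4"] e by auto
  have "norm (w1 (\<nu>s (diag_subseq n)) limit_measure - 0) < e" if n: "n \<ge> max N1 N2" for n
  proof -
    have "2 * K * unmatched_mass k (diag_subseq n) < 2 * K * (e / (6 * K))"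
      using N1[of n] n K by (intro mult_strict_left_mono) auto
    also have "\<dots> = e / 3" using K by (simp add: field_simps)
    finally have u: "2 * K * unmatched_mass k (diag_subseq n) < e / 3" .
    have "n \<le> diag_subseq n" using seq_suble[OF diag_subseq_props(1)] by blast
    then have "tail x0 K (\<nu>s (diag_subseq n)) \<le> ennreal (e / 4)" using N2 n by auto
    then have tl: "enn2real (tail x0 K (\<nu>s (diag_subseq n))) \<le> e / 4"
      using e enn2real_mono[of "tail x0 K (\<nu>s (diag_subseq n))" "ennreal (e / 4)"] by simp
    have "0 \<le> w1 (\<nu>s (diag_subseq n)) limit_measure" by (simp add: w1_def)
    then show ?thesis using w1_limit_measure_le[of "diag_subseq n" k] u tl k by simp
  qed
  then show "\<exists>N. \<forall>n\<ge>N. norm (w1 (\<nu>s (diag_subseq n)) limit_measure - 0) < e" by blast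
qed

end

theorem w1_convergent_subsequence:
  fixes x0 :: "'a::metric_space" and \<nu>s :: "nat \<Rightarrow> 'a measure"
  assumes "proper_space TYPE('a)" "K > 0" "\<And>n. \<nu>s n \<in> P1"
    and "\<And>e. e > 0 \<Longrightarrow> \<exists>N. \<forall>n\<ge>N. tail x0 K (\<nu>s n) \<le> ennreal e"
  shows "\<exists>r \<mu>. strict_mono r \<and> \<mu> \<in> P1 \<and> (\<lambda>n. w1 (\<nu>s (r n)) \<mu>) \<longlonglongrightarrow> 0"
proof -
  interpret tight_sequence x0 K \<nu>s by unfold_locales (use assms in auto)
  show ?thesis using diag_subseq_props(1) limit_measure_P1 w1_limit_measure_tendsto by blast
qed

theorem mainTheorem6:
  fixes f :: "'a::metric_space \<Rightarrow> 'a" and x0 :: 'a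
    and R0 c :: real and m :: nat and Bw :: "'a measure set"
  assumes "proper_space TYPE('a)"
    and "continuous_on UNIV f"
    and "\<forall>\<mu>\<in>P1. pushfwd f \<mu> \<in> P1"
    and "w1_continuous (pushfwd f)"
    and "R0 \<ge> 0" and "0 \<le> c" and "c < 1" and "m > 0"
    and "\<forall>R\<ge>R0. (f ^^ m) ` cball x0 R \<subseteq> cball x0 (c * R)"
    and "Bw \<subseteq> P1" and "w1_bounded Bw" and "w1_closed Bw"
  shows "admissible (pushfwd f) Bw"
proof -
  note proper = assms(1) and cf = assms(2) and R0 = assms(5) and c = assms(6,7)
    and contr = assms(9) and Bw_P1 = assms(10)
  obtain C where C: "C \<ge> 0" "\<And>\<rho>. \<rho> \<in> Bw \<Longrightarrow> moment x0 \<rho> \<le> ennreal C"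
    using w1_bounded_moment_bound[OF assms(11) Bw_P1 proper] by blast
  define K where "K = 2 * (R0 / (1 - c)) + 1"
  have "R0 / (1 - c) \<ge> 0" using R0 c by simp
  then have K: "K > 0" "K \<ge> 2 * (R0 / (1 - c))" unfolding K_def by linarith+
  show ?thesis unfolding admissible_def
  proof (intro allI impI)
    fix s :: "nat \<Rightarrow> 'a measure" and ms :: "nat \<Rightarrow> nat"
    assume orbit: "filterlim ms at_top sequentially \<and> (\<forall>n. \<forall>k\<le>ms n. (pushfwd f ^^ k) (s n) \<in> Bw)"
    let ?\<nu> = "\<lambda>n. (pushfwd f ^^ ms n) (s n)"
    have "?\<nu> n \<in> P1" for n using orbit Bw_P1 by blast
    moreover have "\<exists>n0. \<forall>n\<ge>n0. tail x0 K (?\<nu> n) \<le> ennreal e" if "e > 0" for e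
      by (rule orbit_tails_vanish[OF cf R0 c contr Bw_P1 C K(2) _ _ that]) (use orbit in auto)
    ultimately show "\<exists>r \<mu>. strict_mono r \<and> \<mu> \<in> P1 \<and> (\<lambda>n. w1 ((pushfwd f ^^ ms (r n)) (s (r n))) \<mu>) \<longlonglongrightarrow> 0"
      using w1_convergent_subsequence[OF proper K(1), of ?\<nu>] by blast
  qed
qed

end
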